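(* Let $k\ge l\ge0$. The projection operator $\Pi=\sum_{i,j\ge0}\beta_{i,j}(k,l)\,C^iS_u^jA^iS_x^j$ from $\mathcal{P}_{k,l}(\mathbb{R}^{2m},\mathbb{C})\cap\ker(\Delta_x,\Delta_u)$ onto $\mathcal{H}_{k,l}(\mathbb{R}^{2m},\mathbb{C})$, with $$\beta_{i,j}(k,l)=\frac{(-1)^{i+j}}{i!\,j!}\,\frac{(k+\frac m2-i+j-1)\,(l+\frac m2-j-3)_{(i)}}{(k+\frac m2+j-1)\,(l+\frac m2-3)_{(i)}\,(k+l+m-4)_{(i)}\,(k-l+2)^{(j)}},$$ is self-adjoint with respect to the Fischer inner product.
   Context: Fix an integer $m>4$. For $x,u\in\mathbb{R}^m$ let $\mathcal{P}_{p,q}(\mathbb{R}^{2m},\mathbb{C})$ be complex polynomials of degree $p$ in $x$ and $q$ in $u$. The Fischer inner product is $[P,Q]_F=\overline{P}(\partial_x,\partial_u)Q(x,u)\big|_{x=u=0}$ ($\overline{P}(\partial_x,\partial_u)$: conjugate coefficients of $P$ and replace $x_j,u_j$ by $\partial_{x_j},\partial_{u_j}$). Write $|x|^2=\sum x_j^2$, $\langle u,x\rangle=\sum u_jx_j$, $\Delta_x=\sum\partial_{x_j}^2$, $\Delta_u=\sum\partial_{u_j}^2$, $\langle\partial_u,\partial_x\rangle=\sum\partial_{u_j}\partial_{x_j}$, $\langle x,\partial_u\rangle=\sum x_j\partial_{u_j}$, $\langle u,\partial_x\rangle=\sum u_j\partial_{x_j}$, $\ker(D_1,\dots,D_r)=\bigcap\ker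 D_i$. Every $P\in\mathcal{P}_{p,q}$ is uniquely $\sum_{a,b\ge0}|x|^{2a}|u|^{2b}H'_{p-2a,q-2b}$ with $H'_{p-2a,q-2b}\in\mathcal{P}_{p-2a,q-2b}\cap\ker(\Delta_x,\Delta_u)$; $\pi_{\mathfrak{s}}P:=H'_{p,q}$. On $\ker(\Delta_x,\Delta_u)$: $S_x=\pi_{\mathfrak{s}}\langle x,\partial_u\rangle$, $S_u=\pi_{\mathfrak{s}}\langle u,\partial_x\rangle$, $A=\pi_{\mathfrak{s}}\langle\partial_u,\partial_x\rangle$, $C=\pi_{\mathfrak{s}}\langle u,x\rangle$. $\mathcal{H}_{k,l}=\mathcal{P}_{k,l}\cap\ker(\Delta_x,\Delta_u,\langle\partial_u,\partial_x\rangle,\langle x,\partial_u\rangle)$. Rising factorial $\alpha^{(j)}=\alpha(\alpha+1)\cdots(\alpha+j-1)$, falling $\alpha_{(j)}=\alpha(\alpha-1)\cdots(\alpha-j+1)$, both $1$ for $j=0$. *)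

theory Defs
  imports Complex_Main "HOL-Library.Poly_Mapping"
begin

text \<open>Complex polynomials in the 2m real variables x_1..x_m, u_1..u_m.
  Variable x_j (j<m) has index j, variable u_j has index m+j.
  A monomial is a finitely supported exponent vector nat =>0 nat.\<close>

type_synonym cpoly = "(nat \<Rightarrow>\<^sub>0 nat) \<Rightarrow>\<^sub>0 complex"

definition pvar :: "nat \<Rightarrow> cpoly" where
  "pvar i = Poly_Mapping.single (Poly_Mapping.single i 1) 1"

definition pconst :: "complex \<Rightarrow> cpoly" where
  "pconst c = Poly_Mapping.single 0 c"

definition pdiff :: "nat \<Rightarrow> cpoly \<Rightarrow> cpoly" where
  "pdiff i P = (\<Sum>\<alpha>\<in>Poly_Mapping.keys P. Poly_Mapping.single (\<alpha> - Poly_Mapping.single i 1)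
                     (of_nat (Poly_Mapping.lookup (\<alpha>::nat \<Rightarrow>\<^sub>0 nat) i) * Poly_Mapping.lookup P \<alpha>))"

definition diff_mono :: "(nat \<Rightarrow>\<^sub>0 nat) \<Rightarrow> cpoly \<Rightarrow> cpoly" where
  "diff_mono \<alpha> Q = foldr (\<lambda>i. pdiff i ^^ Poly_Mapping.lookup \<alpha> i) (sorted_list_of_set (Poly_Mapping.keys \<alpha>)) Q"

definition fischer :: "cpoly \<Rightarrow> cpoly \<Rightarrow> complex" where
  "fischer P Q = Poly_Mapping.lookup (\<Sum>\<alpha>\<in>Poly_Mapping.keys P. Poly_Mapping.single 0 (cnj (Poly_Mapping.lookup P \<alpha>)) * diff_mono \<alpha> Q) 0"

definition Pspace :: "nat \<Rightarrow> nat \<Rightarrow> nat \<Rightarrow> cpoly set" where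
  "Pspace m p q = {P. \<forall>\<alpha>\<in>Poly_Mapping.keys P. Poly_Mapping.keys \<alpha> \<subseteq> {..<2*m}
        \<and> (\<Sum>j<m. Poly_Mapping.lookup \<alpha> j) = p \<and> (\<Sum>j<m. Poly_Mapping.lookup \<alpha> (m+j)) = q}"

definition normx2 :: "nat \<Rightarrow> cpoly" where "normx2 m = (\<Sum>j<m. pvar j ^ 2)"
definition normu2 :: "nat \<Rightarrow> cpoly" where "normu2 m = (\<Sum>j<m. pvar (m+j) ^ 2)"
definition ux :: "nat \<Rightarrow> cpoly" where "ux m = (\<Sum>j<m. pvar (m+j) * pvar j)"

definition Lap_x :: "nat \<Rightarrow> cpoly \<Rightarrow> cpoly" where
  "Lap_x m P = (\<Sum>j<m. pdiff j (pdiff j P))"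
definition Lap_u :: "nat \<Rightarrow> cpoly \<Rightarrow> cpoly" where
  "Lap_u m P = (\<Sum>j<m. pdiff (m+j) (pdiff (m+j) P))"
definition du_dx :: "nat \<Rightarrow> cpoly \<Rightarrow> cpoly" where
  "du_dx m P = (\<Sum>j<m. pdiff (m+j) (pdiff j P))"
definition x_du :: "nat \<Rightarrow> cpoly \<Rightarrow> cpoly" where
  "x_du m P = (\<Sum>j<m. pvar j * pdiff (m+j) P)"
definition u_dx :: "nat \<Rightarrow> cpoly \<Rightarrow> cpoly" where
  "u_dx m P = (\<Sum>j<m. pvar (m+j) * pdiff j P)"

definition harm :: "nat \<Rightarrow> cpoly set" where
  "harm m = {P. Lap_x m P = 0 \<and> Lap_u m P = 0}"

definition pi_s :: "nat \<Rightarrow> nat \<Rightarrow> nat \<Rightarrow> cpoly \<Rightarrow> cpoly" where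
  "pi_s m p q P = (THE H. \<exists>Hs :: nat \<Rightarrow> nat \<Rightarrow> cpoly.
      (\<forall>a\<le>p div 2. \<forall>b\<le>q div 2. Hs a b \<in> Pspace m (p - 2*a) (q - 2*b) \<inter> harm m)
      \<and> P = (\<Sum>a\<le>p div 2. \<Sum>b\<le>q div 2. normx2 m ^ a * normu2 m ^ b * Hs a b)
      \<and> H = Hs 0 0)"

definition S_x :: "nat \<Rightarrow> nat \<Rightarrow> nat \<Rightarrow> cpoly \<Rightarrow> cpoly" where
  "S_x m p q P = pi_s m (p+1) (q-1) (x_du m P)"
definition S_u :: "nat \<Rightarrow> nat \<Rightarrow> nat \<Rightarrow> cpoly \<Rightarrow> cpoly" where
  "S_u m p q P = pi_s m (p-1) (q+1) (u_dx m P)"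
definition A_op :: "nat \<Rightarrow> nat \<Rightarrow> nat \<Rightarrow> cpoly \<Rightarrow> cpoly" where
  "A_op m p q P = pi_s m (p-1) (q-1) (du_dx m P)"
definition C_op :: "nat \<Rightarrow> nat \<Rightarrow> nat \<Rightarrow> cpoly \<Rightarrow> cpoly" where
  "C_op m p q P = pi_s m (p+1) (q+1) (ux m * P)"

text \<open>Iterates, tracking the bidegree: input of bidegree (p,q).\<close>
fun S_x_pow :: "nat \<Rightarrow> nat \<Rightarrow> nat \<Rightarrow> nat \<Rightarrow> cpoly \<Rightarrow> cpoly" where
  "S_x_pow m 0 p q P = P"
| "S_x_pow m (Suc n) p q P = S_x m (p+n) (q-n) (S_x_pow m n p q P)"
fun S_u_pow :: "nat \<Rightarrow> nat \<Rightarrow> nat \<Rightarrow> nat \<Rightarrow> cpoly \<Rightarrow> cpoly" where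
  "S_u_pow m 0 p q P = P"
| "S_u_pow m (Suc n) p q P = S_u m (p-n) (q+n) (S_u_pow m n p q P)"
fun A_pow :: "nat \<Rightarrow> nat \<Rightarrow> nat \<Rightarrow> nat \<Rightarrow> cpoly \<Rightarrow> cpoly" where
  "A_pow m 0 p q P = P"
| "A_pow m (Suc n) p q P = A_op m (p-n) (q-n) (A_pow m n p q P)"
fun C_pow :: "nat \<Rightarrow> nat \<Rightarrow> nat \<Rightarrow> nat \<Rightarrow> cpoly \<Rightarrow> cpoly" where
  "C_pow m 0 p q P = P"
| "C_pow m (Suc n) p q P = C_op m (p+n) (q+n) (C_pow m n p q P)"

definition rising :: "real \<Rightarrow> nat \<Rightarrow> real" where
  "rising a j = (\<Prod>t<j. a + real t)"
definition falling :: "real \<Rightarrow> nat \<Rightarrow> real" where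
  "falling a j = (\<Prod>t<j. a - real t)"

definition beta :: "nat \<Rightarrow> nat \<Rightarrow> nat \<Rightarrow> nat \<Rightarrow> nat \<Rightarrow> real" where
  "beta m k l i j =
     (-1) ^ (i+j) / (fact i * fact j) *
     ((real k + real m / 2 - real i + real j - 1) * falling (real l + real m / 2 - real j - 3) i)
     / ((real k + real m / 2 + real j - 1) * falling (real l + real m / 2 - 3) i
        * falling (real k + real l + real m - 4) i * rising (real k - real l + 2) j)"

text \<open>Terms with i > l or j > l vanish (S_x^j A^i kills bidegree (k,l) once i+j > l),
  so the sum is taken over i,j \<le> l.\<close>
definition Proj :: "nat \<Rightarrow> nat \<Rightarrow> nat \<Rightarrow> cpoly \<Rightarrow> cpoly" where
  "Proj m k l P = (\<Sum>i\<le>l. \<Sum>j\<le>l.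
      Poly_Mapping.single 0 (complex_of_real (beta m k l i j)) *
      C_pow m i (k-i) (l-i)
        (S_u_pow m j (k+j-i) (l-j-i)
          (A_pow m i (k+j) (l-j)
            (S_x_pow m j k l P))))"

end

theory Submission
  imports Defs
begin

text \<open>
  On \<open>ker(\<Delta>\<^sub>x,\<Delta>\<^sub>u)\<close> the four operators are explicit: \<open>A = \<langle>\<partial>\<^sub>u,\<partial>\<^sub>x\<rangle>\<close>,
  \<open>S\<^sub>x = \<langle>x,\<partial>\<^sub>u\<rangle> - c |x|\<^sup>2 A\<close>, symmetrically for \<open>S\<^sub>u\<close>, and \<open>C = \<langle>u,x\<rangle>\<close> minus multiples
  of \<open>|x|\<^sup>2\<close>, \<open>|u|\<^sup>2\<close> and \<open>|x|\<^sup>2|u|\<^sup>2\<close>. Multiplication by a variable is Fischer-adjoint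
  to differentiation in it, and harmonic polynomials are orthogonal to all multiples of \<open>|x|\<^sup>2\<close>
  and \<open>|u|\<^sup>2\<close>; hence \<open>C\<close> is adjoint to \<open>A\<close> and \<open>S\<^sub>u\<close> to \<open>S\<^sub>x\<close>. Since moreover
  \<open>A S\<^sub>x = \<kappa> S\<^sub>x A\<close> with \<open>\<kappa>\<close> real, each summand satisfies
  \<open>\<langle>C\<^sup>i S\<^sub>u\<^sup>j A\<^sup>i S\<^sub>x\<^sup>j P, Q\<rangle> = \<kappa>' \<langle>S\<^sub>x\<^sup>j A\<^sup>i P, S\<^sub>x\<^sup>j A\<^sup>i Q\<rangle>\<close>
  with \<open>\<kappa>'\<close> real, a Hermitian form in \<open>(P, Q)\<close>; the coefficients \<open>\<beta>\<^sub>i\<^sub>,\<^sub>j\<close> are real.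
\<close>

abbreviation mvar :: "nat \<Rightarrow> (nat \<Rightarrow>\<^sub>0 nat)" where
  "mvar i \<equiv> Poly_Mapping.single i 1"

definition scal :: "complex \<Rightarrow> cpoly \<Rightarrow> cpoly" where
  "scal c P = Poly_Mapping.single 0 c * P"

lemma lookup_single_mult:
  "Poly_Mapping.lookup (Poly_Mapping.single a c * (g::cpoly)) k =
    (if \<exists>q. k = a + q then c * Poly_Mapping.lookup g (k - a) else 0)"
proof -
  have "Poly_Mapping.lookup (Poly_Mapping.single a c * g) k =
     c * Sum_any (\<lambda>q. Poly_Mapping.lookup g q when k = a + q)"
    by (simp add: lookup_mult lookup_single when_mult)
  also have "\<dots> = (if \<exists>q. k = a + q then c * Poly_Mapping.lookup g (k - a) else 0)"
  proof (cases "\<exists>q. k = a + q")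
    case True
    then obtain q0 where q0: "k = a + q0" by blast
    have "Sum_any (\<lambda>q. Poly_Mapping.lookup g q when k = a + q) = Sum_any (\<lambda>q. Poly_Mapping.lookup g q when q = q0)"
      using q0 by (intro Sum_any.cong) (auto simp: when_def)
    then show ?thesis using q0 by simp
  qed (simp add: when_def)
  finally show ?thesis .
qed

lemma ex_add_mvar_iff: "(\<exists>q. (k::nat \<Rightarrow>\<^sub>0 nat) = mvar j + q) \<longleftrightarrow> 1 \<le> Poly_Mapping.lookup k j"
proof
  assume "1 \<le> Poly_Mapping.lookup k j"
  then have "k = mvar j + (k - mvar j)"
    by (intro poly_mapping_eqI) (auto simp: lookup_add lookup_minus lookup_single when_def)
  then show "\<exists>q. k = mvar j + q" by blast
qed (auto simp: lookup_add lookup_single)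

lemma lookup_pvar_mult:
  "Poly_Mapping.lookup (pvar j * P) k =
    (if 1 \<le> Poly_Mapping.lookup k j then Poly_Mapping.lookup P (k - mvar j) else 0)"
  unfolding pvar_def lookup_single_mult ex_add_mvar_iff by simp

lemma scal_zero [simp]: "scal c 0 = 0"
  by (simp add: scal_def)

lemma scal_scal [simp]: "scal a (scal b P) = scal (a * b) P"
  by (simp add: scal_def mult.assoc[symmetric] mult_single)

lemma scal_one [simp]: "scal 1 P = P"
  by (simp add: scal_def)

lemma scal_diff: "scal a (P - Q) = scal a P - scal a Q"
  by (simp add: scal_def algebra_simps)

lemma scal_add_left: "scal a P + scal b P = scal (a + b) P"
  by (simp add: scal_def single_add algebra_simps)

lemma scal_diff_left: "scal a P - scal b P = scal (a - b) P"
  by (simp add: scal_def single_diff algebra_simps)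

lemma mult_scal: "Q * scal c P = scal c (Q * P)"
  by (simp add: scal_def mult_ac)

lemma numeral_mult_eq_scal: "numeral n * P = scal (numeral n) P"
  unfolding scal_def by simp

lemma of_nat_mult_eq_scal: "of_nat n * P = scal (of_nat n) P"
  unfolding scal_def by simp

lemma lookup_scal: "Poly_Mapping.lookup (scal c P) k = c * Poly_Mapping.lookup P k"
  unfolding scal_def lookup_single_mult by simp

lemma lookup_pdiff:
  "Poly_Mapping.lookup (pdiff i P) k =
     of_nat (Poly_Mapping.lookup k i + 1) * Poly_Mapping.lookup P (k + mvar i)"
proof -
  define f where "f \<alpha> = of_nat (Poly_Mapping.lookup \<alpha> i) * Poly_Mapping.lookup P \<alpha>" for \<alpha>
  have shift: "(\<alpha> - mvar i = k) = (\<alpha> = k + mvar i)" if "Poly_Mapping.lookup \<alpha> i \<noteq> 0" for \<alpha>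
  proof
    assume "\<alpha> - mvar i = k"
    then show "\<alpha> = k + mvar i"
      using that by (auto intro!: poly_mapping_eqI simp: lookup_add lookup_minus lookup_single when_def)
  qed (auto intro!: poly_mapping_eqI simp: lookup_add lookup_minus lookup_single when_def)
  have "Poly_Mapping.lookup (pdiff i P) k = (\<Sum>\<alpha>\<in>Poly_Mapping.keys P. f \<alpha> when \<alpha> - mvar i = k)"
    by (simp add: pdiff_def lookup_sum lookup_single f_def)
  also have "\<dots> = (\<Sum>\<alpha>\<in>Poly_Mapping.keys P. if \<alpha> = k + mvar i then f \<alpha> else 0)"
  proof (intro sum.cong refl)
    fix \<alpha>
    show "(f \<alpha> when \<alpha> - mvar i = k) = (if \<alpha> = k + mvar i then f \<alpha> else 0)"
    proof (cases "Poly_Mapping.lookup \<alpha> i = 0")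
      case True
      then have "\<alpha> \<noteq> k + mvar i" by (auto simp: lookup_add)
      with True show ?thesis by (simp add: f_def when_def)
    qed (use shift in \<open>simp add: when_def\<close>)
  qed
  also have "\<dots> = f (k + mvar i)"
    by (simp add: f_def in_keys_iff)
  finally show ?thesis by (simp add: f_def lookup_add)
qed

lemma lookup_pdiff_pow:
  "Poly_Mapping.lookup ((pdiff i ^^ n) Q) k =
     pochhammer (of_nat (Poly_Mapping.lookup k i) + 1) n *
     Poly_Mapping.lookup Q (k + Poly_Mapping.single i n)"
proof (induction n arbitrary: k)
  case (Suc n)
  have "k + mvar i + Poly_Mapping.single i n = k + Poly_Mapping.single i (Suc n)"
    by (rule poly_mapping_eqI) (simp add: lookup_add lookup_single when_def)
  then show ?case
    by (simp add: lookup_pdiff Suc.IH pochhammer_rec lookup_add add_ac)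
qed simp

lemma lookup_foldr_pdiff:
  assumes "distinct xs"
  shows "Poly_Mapping.lookup (foldr (\<lambda>i. pdiff i ^^ f i) xs Q) k =
     (\<Prod>i\<in>set xs. pochhammer (of_nat (Poly_Mapping.lookup k i) + 1) (f i)) *
      Poly_Mapping.lookup Q (k + (\<Sum>i\<in>set xs. Poly_Mapping.single i (f i)))"
  using assms
proof (induction xs arbitrary: k)
  case (Cons x xs)
  have x: "x \<notin> set xs" and d: "distinct xs" using Cons.prems by auto
  have "Poly_Mapping.lookup (k + Poly_Mapping.single x (f x)) i = Poly_Mapping.lookup k i"
    if "i \<in> set xs" for i
    using that x by (auto simp: lookup_add lookup_single when_def)
  then show ?case
    using x by (simp add: lookup_pdiff_pow Cons.IH[OF d] add_ac)
qed simp

section \<open>The Fischer inner product as a weighted coefficient sum\<close>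

definition mfact :: "(nat \<Rightarrow>\<^sub>0 nat) \<Rightarrow> nat" where
  "mfact \<alpha> = (\<Prod>i\<in>Poly_Mapping.keys \<alpha>. fact (Poly_Mapping.lookup \<alpha> i))"

lemma mfact_pos: "0 < mfact \<alpha>"
  by (simp add: mfact_def)

lemma mfact_superset:
  assumes "finite S" "Poly_Mapping.keys \<alpha> \<subseteq> S"
  shows "mfact \<alpha> = (\<Prod>j\<in>S. fact (Poly_Mapping.lookup \<alpha> j))"
  unfolding mfact_def by (rule prod.mono_neutral_left) (use assms in \<open>auto simp: in_keys_iff\<close>)

lemma mfact_add_mvar: "mfact (\<beta> + mvar i) = mfact \<beta> * (Poly_Mapping.lookup \<beta> i + 1)"
proof -
  let ?S = "insert i (Poly_Mapping.keys \<beta>)"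
  let ?R = "\<Prod>j\<in>?S - {i}. fact (Poly_Mapping.lookup \<beta> j) :: nat"
  have "Poly_Mapping.keys (\<beta> + mvar i) \<subseteq> ?S"
    using keys_add[of \<beta> "mvar i"] by auto
  then have "mfact (\<beta> + mvar i) = fact (Poly_Mapping.lookup \<beta> i + 1) * ?R"
    by (simp add: mfact_superset[of ?S] prod.remove[of ?S i] lookup_add lookup_single)
  moreover have "mfact \<beta> = fact (Poly_Mapping.lookup \<beta> i) * ?R"
    by (subst mfact_superset[of ?S]) (auto simp: prod.remove[of ?S i])
  ultimately show ?thesis by (simp add: algebra_simps)
qed

lemma lookup_diff_mono_zero:
  "Poly_Mapping.lookup (diff_mono \<alpha> Q) 0 = of_nat (mfact \<alpha>) * Poly_Mapping.lookup Q \<alpha>"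
proof -
  have "(\<Sum>i\<in>Poly_Mapping.keys \<alpha>. Poly_Mapping.single i (Poly_Mapping.lookup \<alpha> i)) = \<alpha>"
    by (rule poly_mapping_eqI) (simp add: lookup_sum lookup_single when_def in_keys_iff)
  then show ?thesis
    unfolding diff_mono_def
    by (simp add: lookup_foldr_pdiff mfact_def pochhammer_fact[symmetric])
qed

lemma fischer_eq_sum:
  "fischer P Q = (\<Sum>\<alpha>\<in>Poly_Mapping.keys P.
     cnj (Poly_Mapping.lookup P \<alpha>) * of_nat (mfact \<alpha>) * Poly_Mapping.lookup Q \<alpha>)"
  unfolding fischer_def
  by (simp add: lookup_sum lookup_single_mult lookup_diff_mono_zero mult.assoc)

lemma fischer_eq_sum_superset:
  assumes "finite S" "Poly_Mapping.keys P \<subseteq> S"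
  shows "fischer P Q = (\<Sum>\<alpha>\<in>S.
     cnj (Poly_Mapping.lookup P \<alpha>) * of_nat (mfact \<alpha>) * Poly_Mapping.lookup Q \<alpha>)"
  unfolding fischer_eq_sum
  by (rule sum.mono_neutral_left) (use assms in \<open>auto simp: in_keys_iff\<close>)

lemma fischer_cnj_commute: "fischer P Q = cnj (fischer Q P)"
  using fischer_eq_sum_superset[of "Poly_Mapping.keys P \<union> Poly_Mapping.keys Q"]
  by (simp add: mult_ac)

lemma fischer_add_left: "fischer (P + Q) R = fischer P R + fischer Q R"
proof -
  let ?S = "Poly_Mapping.keys P \<union> Poly_Mapping.keys Q"
  have "Poly_Mapping.keys (P + Q) \<subseteq> ?S" by (rule keys_add)
  then show ?thesis
    by (simp add: fischer_eq_sum_superset[of ?S] lookup_add sum.distrib[symmetric] algebra_simps)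
qed

lemma fischer_scal_left: "fischer (scal c P) R = cnj c * fischer P R"
proof -
  have "Poly_Mapping.keys (scal c P) \<subseteq> Poly_Mapping.keys P"
    by (auto simp: in_keys_iff lookup_scal)
  then show ?thesis
    by (simp add: fischer_eq_sum_superset[of "Poly_Mapping.keys P"] fischer_eq_sum[of P]
        lookup_scal sum_distrib_left mult_ac)
qed

lemma fischer_zero_left [simp]: "fischer 0 R = 0"
  by (simp add: fischer_eq_sum)

lemma fischer_zero_right [simp]: "fischer R 0 = 0"
  by (simp add: fischer_eq_sum)

lemma fischer_uminus_left: "fischer (- P) R = - fischer P R"
  using fischer_add_left[of P "- P" R] by (simp add: eq_neg_iff_add_eq_0 add.commute)

lemma fischer_diff_left: "fischer (P - Q) R = fischer P R - fischer Q R"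
  using fischer_add_left[of P "- Q" R] by (simp add: fischer_uminus_left)

lemma fischer_sum_left: "fischer (sum f I) R = (\<Sum>i\<in>I. fischer (f i) R)"
  by (induction I rule: infinite_finite_induct) (auto simp: fischer_add_left)

lemma fischer_diff_right: "fischer R (P - Q) = fischer R P - fischer R Q"
  by (subst (1 2 3) fischer_cnj_commute) (simp add: fischer_diff_left)

lemma fischer_scal_right: "fischer R (scal c P) = c * fischer R P"
  by (subst (1 2) fischer_cnj_commute) (simp add: fischer_scal_left)

lemma fischer_sum_right: "fischer R (sum f I) = (\<Sum>i\<in>I. fischer R (f i))"
  by (subst fischer_cnj_commute) (simp add: fischer_sum_left fischer_cnj_commute[of R])

lemma fischer_self_eq_0D:
  assumes "fischer P P = 0"
  shows "P = 0"
proof -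
  let ?w = "\<lambda>\<alpha>. (cmod (Poly_Mapping.lookup P \<alpha>))\<^sup>2 * real (mfact \<alpha>)"
  have summand: "cnj (Poly_Mapping.lookup P \<alpha>) * of_nat (mfact \<alpha>) * Poly_Mapping.lookup P \<alpha> = of_real (?w \<alpha>)" for \<alpha>
  proof -
    have "cnj (Poly_Mapping.lookup P \<alpha>) * Poly_Mapping.lookup P \<alpha> = of_real ((cmod (Poly_Mapping.lookup P \<alpha>))\<^sup>2)"
      by (metis complex_norm_square mult.commute)
    then show ?thesis
      by (metis (no_types, lifting) mult.commute mult.left_commute of_real_mult of_real_of_nat_eq)
  qed
  have "fischer P P = of_real (\<Sum>\<alpha>\<in>Poly_Mapping.keys P. ?w \<alpha>)"
    unfolding fischer_eq_sum of_real_sum by (rule sum.cong[OF refl summand])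
  then have "(\<Sum>\<alpha>\<in>Poly_Mapping.keys P. ?w \<alpha>) = 0"
    using assms by (metis of_real_eq_0_iff)
  then have "\<forall>\<alpha>\<in>Poly_Mapping.keys P. ?w \<alpha> = 0"
    by (subst sum_nonneg_eq_0_iff[symmetric]) auto
  then have "Poly_Mapping.lookup P \<alpha> = 0" for \<alpha>
    using mfact_pos[of \<alpha>] by (cases "\<alpha> \<in> Poly_Mapping.keys P") (auto simp: in_keys_iff)
  then show "P = 0" by (intro poly_mapping_eqI) simp
qed

lemma fischer_pvar_mult_left: "fischer (pvar i * P) Q = fischer P (pdiff i Q)"
proof -
  let ?sh = "\<lambda>\<beta>. \<beta> + mvar i"
  have cancel: "\<beta> + mvar i - mvar i = \<beta>" for \<beta> :: "nat \<Rightarrow>\<^sub>0 nat"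
    by (rule poly_mapping_eqI) (simp add: lookup_add lookup_minus)
  have keys: "Poly_Mapping.keys (pvar i * P) \<subseteq> ?sh ` Poly_Mapping.keys P"
  proof
    fix \<alpha> assume "\<alpha> \<in> Poly_Mapping.keys (pvar i * P)"
    then have a: "1 \<le> Poly_Mapping.lookup \<alpha> i" "\<alpha> - mvar i \<in> Poly_Mapping.keys P"
      by (auto simp: in_keys_iff lookup_pvar_mult split: if_splits)
    then have "\<alpha> = ?sh (\<alpha> - mvar i)"
      by (intro poly_mapping_eqI) (auto simp: lookup_add lookup_minus lookup_single when_def)
    with a show "\<alpha> \<in> ?sh ` Poly_Mapping.keys P" by blast
  qed
  have "fischer (pvar i * P) Q = (\<Sum>\<beta>\<in>Poly_Mapping.keys P.
      cnj (Poly_Mapping.lookup (pvar i * P) (?sh \<beta>)) * of_nat (mfact (?sh \<beta>)) * Poly_Mapping.lookup Q (?sh \<beta>))"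
    by (subst fischer_eq_sum_superset[OF _ keys], simp, subst sum.reindex) (simp_all add: inj_on_def)
  also have "\<dots> = fischer P (pdiff i Q)"
    unfolding fischer_eq_sum[of P]
  proof (intro sum.cong refl)
    fix \<beta>
    have "Poly_Mapping.lookup (pvar i * P) (?sh \<beta>) = Poly_Mapping.lookup P \<beta>"
      by (simp add: lookup_pvar_mult lookup_add cancel)
    then show "cnj (Poly_Mapping.lookup (pvar i * P) (?sh \<beta>)) * of_nat (mfact (?sh \<beta>)) *
        Poly_Mapping.lookup Q (?sh \<beta>) =
      cnj (Poly_Mapping.lookup P \<beta>) * of_nat (mfact \<beta>) * Poly_Mapping.lookup (pdiff i Q) \<beta>"
      using mfact_add_mvar[of \<beta> i] by (simp add: lookup_pdiff algebra_simps)
  qed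
  finally show ?thesis .
qed

lemma fischer_pvar_mult_right: "fischer P (pvar i * Q) = fischer (pdiff i P) Q"
  by (subst (1 2) fischer_cnj_commute) (simp add: fischer_pvar_mult_left)

lemma pdiff_add: "pdiff i (P + Q) = pdiff i P + pdiff i Q"
  by (rule poly_mapping_eqI) (simp add: lookup_pdiff lookup_add algebra_simps)

lemma pdiff_diff: "pdiff i (P - Q) = pdiff i P - pdiff i Q"
  by (rule poly_mapping_eqI) (simp add: lookup_pdiff lookup_minus algebra_simps)

lemma pdiff_zero [simp]: "pdiff i 0 = 0"
  by (rule poly_mapping_eqI) (simp add: lookup_pdiff)

lemma pdiff_sum: "pdiff i (sum f I) = (\<Sum>x\<in>I. pdiff i (f x))"
  by (induction I rule: infinite_finite_induct) (auto simp: pdiff_add)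

lemma pdiff_scal: "pdiff i (scal c P) = scal c (pdiff i P)"
  by (rule poly_mapping_eqI) (simp add: lookup_pdiff lookup_scal algebra_simps)

lemma pdiff_commute: "pdiff i (pdiff j P) = pdiff j (pdiff i P)"
  by (rule poly_mapping_eqI, cases "i = j") (simp_all add: lookup_pdiff lookup_add lookup_single add_ac mult_ac)

lemma pdiff_pvar_mult_same: "pdiff i (pvar i * P) = P + pvar i * pdiff i P"
proof (rule poly_mapping_eqI)
  fix k
  have "k + mvar i - mvar i = k"
    by (rule poly_mapping_eqI) (simp add: lookup_add lookup_minus)
  then have lhs: "Poly_Mapping.lookup (pdiff i (pvar i * P)) k =
      of_nat (Poly_Mapping.lookup k i + 1) * Poly_Mapping.lookup P k"
    by (simp add: lookup_pdiff lookup_pvar_mult lookup_add)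
  show "Poly_Mapping.lookup (pdiff i (pvar i * P)) k = Poly_Mapping.lookup (P + pvar i * pdiff i P) k"
  proof (cases "1 \<le> Poly_Mapping.lookup k i")
    case True
    have "k - mvar i + mvar i = k"
      by (rule poly_mapping_eqI) (use True in \<open>auto simp: lookup_add lookup_minus lookup_single when_def\<close>)
    moreover have "Poly_Mapping.lookup (k - mvar i) i + 1 = Poly_Mapping.lookup k i"
      using True by (simp add: lookup_minus)
    ultimately show ?thesis
      using True lhs by (simp only: lookup_add lookup_pvar_mult lookup_pdiff if_True) (simp add: algebra_simps)
  qed (use lhs in \<open>simp add: lookup_pvar_mult lookup_add\<close>)
qed

lemma pdiff_pvar_mult_other: "i \<noteq> j \<Longrightarrow> pdiff i (pvar j * P) = pvar j * pdiff i P"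
proof (rule poly_mapping_eqI)
  fix k assume "i \<noteq> j"
  moreover have "k + mvar i - mvar j = k - mvar j + mvar i"
    by (rule poly_mapping_eqI) (use \<open>i \<noteq> j\<close> in \<open>auto simp: lookup_add lookup_minus lookup_single when_def\<close>)
  ultimately show "Poly_Mapping.lookup (pdiff i (pvar j * P)) k = Poly_Mapping.lookup (pvar j * pdiff i P) k"
    by (simp only: lookup_pdiff lookup_pvar_mult) (simp add: lookup_add lookup_minus lookup_single)
qed

lemma pdiff_pvar_mult: "pdiff i (pvar j * P) = (if i = j then P else 0) + pvar j * pdiff i P"
  by (cases "i = j") (simp_all add: pdiff_pvar_mult_same pdiff_pvar_mult_other)

lemma lookup_pvar_mult_pdiff:
  "Poly_Mapping.lookup (pvar j * pdiff j P) k = of_nat (Poly_Mapping.lookup k j) * Poly_Mapping.lookup P k"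
proof (cases "1 \<le> Poly_Mapping.lookup k j")
  case True
  have "k - mvar j + mvar j = k"
    by (rule poly_mapping_eqI) (use True in \<open>auto simp: lookup_add lookup_minus lookup_single when_def\<close>)
  moreover have "Poly_Mapping.lookup (k - mvar j) j + 1 = Poly_Mapping.lookup k j"
    using True by (simp add: lookup_minus)
  ultimately show ?thesis using True by (simp only: lookup_pvar_mult lookup_pdiff if_True)
qed (simp add: lookup_pvar_mult)

lemma Pspace_zero [simp]: "0 \<in> Pspace m p q"
  unfolding Pspace_def by simp

lemma Pspace_keys_subset:
  "Poly_Mapping.keys R \<subseteq> Poly_Mapping.keys P \<union> Poly_Mapping.keys Q \<Longrightarrow>
   P \<in> Pspace m p q \<Longrightarrow> Q \<in> Pspace m p q \<Longrightarrow> R \<in> Pspace m p q"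
  unfolding Pspace_def by blast

lemma Pspace_add: "P \<in> Pspace m p q \<Longrightarrow> Q \<in> Pspace m p q \<Longrightarrow> P + Q \<in> Pspace m p q"
  by (rule Pspace_keys_subset[OF keys_add])

lemma Pspace_diff: "P \<in> Pspace m p q \<Longrightarrow> Q \<in> Pspace m p q \<Longrightarrow> P - Q \<in> Pspace m p q"
  by (rule Pspace_keys_subset[OF keys_diff])

lemma Pspace_scal: "P \<in> Pspace m p q \<Longrightarrow> scal c P \<in> Pspace m p q"
  by (rule Pspace_keys_subset[of _ P P]) (auto simp: in_keys_iff lookup_scal)

lemma Pspace_sum: "(\<And>i. i \<in> I \<Longrightarrow> f i \<in> Pspace m p q) \<Longrightarrow> sum f I \<in> Pspace m p q"
  by (induction I rule: infinite_finite_induct) (simp_all add: Pspace_add)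

abbreviation x_var :: "nat \<Rightarrow> nat \<Rightarrow> nat" where
  "x_var m i \<equiv> if i < m then 1 else 0"

abbreviation u_var :: "nat \<Rightarrow> nat \<Rightarrow> nat" where
  "u_var m i \<equiv> if m \<le> i then 1 else 0"

lemma sum_lookup_mvar_x: "(\<Sum>t<m. Poly_Mapping.lookup (mvar i) t) = x_var m i"
  by (simp add: lookup_single when_def)

lemma sum_lookup_mvar_u:
  assumes "i < 2 * m"
  shows "(\<Sum>t<m. Poly_Mapping.lookup (mvar i) (m + t)) = u_var m i"
proof (cases "m \<le> i")
  case True
  have "(\<Sum>t<m. Poly_Mapping.lookup (mvar i) (m + t)) = (\<Sum>t<m. if t = i - m then 1 else 0)"
    using True by (intro sum.cong) (auto simp: lookup_single when_def)
  with True assms show ?thesis by simp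
qed (simp add: lookup_single when_def)

lemma Pspace_pvar_mult:
  assumes "i < 2 * m" "P \<in> Pspace m p q"
  shows "pvar i * P \<in> Pspace m (p + x_var m i) (q + u_var m i)"
  unfolding Pspace_def
proof (intro CollectI ballI)
  fix \<alpha> assume "\<alpha> \<in> Poly_Mapping.keys (pvar i * P)"
  then have a: "1 \<le> Poly_Mapping.lookup \<alpha> i" "\<alpha> - mvar i \<in> Poly_Mapping.keys P"
    by (auto simp: in_keys_iff lookup_pvar_mult split: if_splits)
  define \<beta> where "\<beta> = \<alpha> - mvar i"
  have \<alpha>: "\<alpha> = \<beta> + mvar i"
    unfolding \<beta>_def using a(1)
    by (intro poly_mapping_eqI) (auto simp: lookup_add lookup_minus lookup_single when_def)
  have \<beta>: "Poly_Mapping.keys \<beta> \<subseteq> {..<2*m}" "(\<Sum>t<m. Poly_Mapping.lookup \<beta> t) = p"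
    "(\<Sum>t<m. Poly_Mapping.lookup \<beta> (m+t)) = q"
    using a(2) assms(2) unfolding \<beta>_def Pspace_def by blast+
  have "Poly_Mapping.keys \<alpha> \<subseteq> {..<2*m}"
    using \<beta>(1) assms(1) keys_add[of \<beta> "mvar i"] unfolding \<alpha> by auto
  moreover have "(\<Sum>t<m. Poly_Mapping.lookup \<alpha> t) = p + x_var m i"
    using \<beta>(2) by (simp only: \<alpha> lookup_add sum.distrib sum_lookup_mvar_x)
  moreover have "(\<Sum>t<m. Poly_Mapping.lookup \<alpha> (m+t)) = q + u_var m i"
    using \<beta>(3) assms(1) by (simp only: \<alpha> lookup_add sum.distrib sum_lookup_mvar_u)
  ultimately show "Poly_Mapping.keys \<alpha> \<subseteq> {..<2*m} \<and> (\<Sum>t<m. Poly_Mapping.lookup \<alpha> t) = p + x_var m i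
      \<and> (\<Sum>t<m. Poly_Mapping.lookup \<alpha> (m+t)) = q + u_var m i" by blast
qed

lemma Pspace_pdiff:
  assumes "i < 2 * m" "P \<in> Pspace m p q"
  shows "pdiff i P \<in> Pspace m (p - x_var m i) (q - u_var m i)"
    and "p < x_var m i \<or> q < u_var m i \<Longrightarrow> pdiff i P = 0"
proof -
  have deg: "Poly_Mapping.keys (\<alpha> + mvar i) \<subseteq> {..<2*m}
      \<and> (\<Sum>t<m. Poly_Mapping.lookup \<alpha> t) + x_var m i = p
      \<and> (\<Sum>t<m. Poly_Mapping.lookup \<alpha> (m+t)) + u_var m i = q"
    if "\<alpha> \<in> Poly_Mapping.keys (pdiff i P)" for \<alpha>
  proof -
    have "\<alpha> + mvar i \<in> Poly_Mapping.keys P"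
      using that by (auto simp: in_keys_iff lookup_pdiff)
    moreover have "(\<Sum>t<m. Poly_Mapping.lookup (\<alpha> + mvar i) t) = (\<Sum>t<m. Poly_Mapping.lookup \<alpha> t) + x_var m i"
      by (simp only: lookup_add sum.distrib sum_lookup_mvar_x)
    moreover have "(\<Sum>t<m. Poly_Mapping.lookup (\<alpha> + mvar i) (m+t)) =
        (\<Sum>t<m. Poly_Mapping.lookup \<alpha> (m+t)) + u_var m i"
      using assms(1) by (simp only: lookup_add sum.distrib sum_lookup_mvar_u)
    ultimately show ?thesis
      using assms(2) unfolding Pspace_def by auto
  qed
  show "pdiff i P \<in> Pspace m (p - x_var m i) (q - u_var m i)"
    unfolding Pspace_def
  proof (intro CollectI ballI)
    fix \<alpha> assume "\<alpha> \<in> Poly_Mapping.keys (pdiff i P)"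
    moreover have "Poly_Mapping.keys \<alpha> \<subseteq> Poly_Mapping.keys (\<alpha> + mvar i)"
      by (auto simp: in_keys_iff lookup_add)
    ultimately show "Poly_Mapping.keys \<alpha> \<subseteq> {..<2*m} \<and> (\<Sum>t<m. Poly_Mapping.lookup \<alpha> t) = p - x_var m i
      \<and> (\<Sum>t<m. Poly_Mapping.lookup \<alpha> (m+t)) = q - u_var m i"
      using deg by fastforce
  qed
  show "pdiff i P = 0" if "p < x_var m i \<or> q < u_var m i"
    using deg that by fastforce
qed

lemma Pspace_pvar_x_mult: "j < m \<Longrightarrow> P \<in> Pspace m p q \<Longrightarrow> pvar j * P \<in> Pspace m (Suc p) q"
  using Pspace_pvar_mult[of j m P p q] by simp

lemma Pspace_pvar_u_mult: "j < m \<Longrightarrow> P \<in> Pspace m p q \<Longrightarrow> pvar (m+j) * P \<in> Pspace m p (Suc q)"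
  using Pspace_pvar_mult[of "m+j" m P p q] by simp

lemma Pspace_pdiff_x: "j < m \<Longrightarrow> P \<in> Pspace m p q \<Longrightarrow> pdiff j P \<in> Pspace m (p - 1) q"
  using Pspace_pdiff(1)[of j m P p q] by simp

lemma Pspace_pdiff_u: "j < m \<Longrightarrow> P \<in> Pspace m p q \<Longrightarrow> pdiff (m+j) P \<in> Pspace m p (q - 1)"
  using Pspace_pdiff(1)[of "m+j" m P p q] by simp

lemma pdiff_x_Pspace_x0: "j < m \<Longrightarrow> P \<in> Pspace m 0 q \<Longrightarrow> pdiff j P = 0"
  using Pspace_pdiff(2)[of j m P 0 q] by simp

lemma pdiff_u_Pspace_u0: "j < m \<Longrightarrow> P \<in> Pspace m p 0 \<Longrightarrow> pdiff (m+j) P = 0"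
  using Pspace_pdiff(2)[of "m+j" m P p 0] by simp

definition Eul_x :: "nat \<Rightarrow> cpoly \<Rightarrow> cpoly" where
  "Eul_x m P = (\<Sum>j<m. pvar j * pdiff j P)"

definition Eul_u :: "nat \<Rightarrow> cpoly \<Rightarrow> cpoly" where
  "Eul_u m P = (\<Sum>j<m. pvar (m+j) * pdiff (m+j) P)"

lemma Eul_x_Pspace:
  assumes "P \<in> Pspace m p q"
  shows "Eul_x m P = scal (of_nat p) P"
proof (rule poly_mapping_eqI)
  fix k
  have "Poly_Mapping.lookup (Eul_x m P) k = of_nat (\<Sum>j<m. Poly_Mapping.lookup k j) * Poly_Mapping.lookup P k"
    by (simp add: Eul_x_def lookup_sum lookup_pvar_mult_pdiff sum_distrib_right)
  also have "\<dots> = of_nat p * Poly_Mapping.lookup P k"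
    using assms by (cases "k \<in> Poly_Mapping.keys P") (auto simp: Pspace_def in_keys_iff)
  finally show "Poly_Mapping.lookup (Eul_x m P) k = Poly_Mapping.lookup (scal (of_nat p) P) k"
    by (simp add: lookup_scal)
qed

lemma Eul_u_Pspace:
  assumes "P \<in> Pspace m p q"
  shows "Eul_u m P = scal (of_nat q) P"
proof (rule poly_mapping_eqI)
  fix k
  have "Poly_Mapping.lookup (Eul_u m P) k = of_nat (\<Sum>j<m. Poly_Mapping.lookup k (m+j)) * Poly_Mapping.lookup P k"
    by (simp add: Eul_u_def lookup_sum lookup_pvar_mult_pdiff sum_distrib_right)
  also have "\<dots> = of_nat q * Poly_Mapping.lookup P k"
    using assms by (cases "k \<in> Poly_Mapping.keys P") (auto simp: Pspace_def in_keys_iff)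
  finally show "Poly_Mapping.lookup (Eul_u m P) k = Poly_Mapping.lookup (scal (of_nat q) P) k"
    by (simp add: lookup_scal)
qed

lemma diff_operators_zero [simp]:
  "Lap_x m 0 = 0" "Lap_u m 0 = 0" "du_dx m 0 = 0" "x_du m 0 = 0" "u_dx m 0 = 0"
  by (simp_all add: Lap_x_def Lap_u_def du_dx_def x_du_def u_dx_def)

lemma Lap_x_sum: "Lap_x m (sum f I) = (\<Sum>i\<in>I. Lap_x m (f i))"
  unfolding Lap_x_def pdiff_sum by (rule sum.swap)
lemma Lap_u_sum: "Lap_u m (sum f I) = (\<Sum>i\<in>I. Lap_u m (f i))"
  unfolding Lap_u_def pdiff_sum by (rule sum.swap)
lemma du_dx_sum: "du_dx m (sum f I) = (\<Sum>i\<in>I. du_dx m (f i))"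
  unfolding du_dx_def pdiff_sum by (rule sum.swap)

lemma Lap_x_diff: "Lap_x m (P - Q) = Lap_x m P - Lap_x m Q"
  unfolding Lap_x_def by (simp add: pdiff_diff sum_subtractf)
lemma Lap_u_diff: "Lap_u m (P - Q) = Lap_u m P - Lap_u m Q"
  unfolding Lap_u_def by (simp add: pdiff_diff sum_subtractf)
lemma du_dx_diff: "du_dx m (P - Q) = du_dx m P - du_dx m Q"
  unfolding du_dx_def by (simp add: pdiff_diff sum_subtractf)

lemma Lap_x_scal: "Lap_x m (scal c P) = scal c (Lap_x m P)"
  unfolding Lap_x_def scal_def by (simp add: pdiff_scal[unfolded scal_def] sum_distrib_left)
lemma Lap_u_scal: "Lap_u m (scal c P) = scal c (Lap_u m P)"
  unfolding Lap_u_def scal_def by (simp add: pdiff_scal[unfolded scal_def] sum_distrib_left)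
lemma du_dx_scal: "du_dx m (scal c P) = scal c (du_dx m P)"
  unfolding du_dx_def scal_def by (simp add: pdiff_scal[unfolded scal_def] sum_distrib_left)
lemma x_du_scal: "x_du m (scal c P) = scal c (x_du m P)"
  unfolding x_du_def scal_def by (simp add: pdiff_scal[unfolded scal_def] sum_distrib_left mult.left_commute)

lemma Lap_x_pdiff: "Lap_x m (pdiff i P) = pdiff i (Lap_x m P)"
  unfolding Lap_x_def pdiff_sum by (simp add: pdiff_commute)
lemma Lap_u_pdiff: "Lap_u m (pdiff i P) = pdiff i (Lap_u m P)"
  unfolding Lap_u_def pdiff_sum by (simp add: pdiff_commute)
lemma du_dx_pdiff: "du_dx m (pdiff i P) = pdiff i (du_dx m P)"
  unfolding du_dx_def pdiff_sum by (simp add: pdiff_commute)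

lemma Lap_x_du_dx: "Lap_x m (du_dx m P) = du_dx m (Lap_x m P)"
  unfolding Lap_x_def du_dx_def pdiff_sum by (subst sum.swap) (simp add: pdiff_commute)
lemma Lap_u_du_dx: "Lap_u m (du_dx m P) = du_dx m (Lap_u m P)"
  unfolding Lap_u_def du_dx_def pdiff_sum by (subst sum.swap) (simp add: pdiff_commute)

lemma pdiff2_pvar_mult:
  "pdiff i (pdiff j (pvar k * F)) =
     (if i = k then pdiff j F else 0) + (if j = k then pdiff i F else 0) + pvar k * pdiff i (pdiff j F)"
  by (simp add: pdiff_pvar_mult pdiff_add pdiff_commute[of i j])

lemma mult_if_zero: "c * (if P then a else 0) = (if P then c * a else (0::cpoly))"
  by simp

lemma Lap_x_pvar_x_mult: "k < m \<Longrightarrow> Lap_x m (pvar k * F) = 2 * pdiff k F + pvar k * Lap_x m F"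
  unfolding Lap_x_def by (simp add: pdiff2_pvar_mult sum.distrib sum_distrib_left mult_if_zero)
lemma Lap_u_pvar_x_mult: "k < m \<Longrightarrow> Lap_u m (pvar k * F) = pvar k * Lap_u m F"
  unfolding Lap_u_def by (simp add: pdiff2_pvar_mult sum.distrib sum_distrib_left mult_if_zero)
lemma Lap_u_pvar_u_mult:
  "k < m \<Longrightarrow> Lap_u m (pvar (m+k) * F) = 2 * pdiff (m+k) F + pvar (m+k) * Lap_u m F"
  unfolding Lap_u_def by (simp add: pdiff2_pvar_mult sum.distrib sum_distrib_left mult_if_zero)
lemma Lap_x_pvar_u_mult: "k < m \<Longrightarrow> Lap_x m (pvar (m+k) * F) = pvar (m+k) * Lap_x m F"
  unfolding Lap_x_def by (simp add: pdiff2_pvar_mult sum.distrib sum_distrib_left mult_if_zero)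
lemma du_dx_pvar_x_mult: "k < m \<Longrightarrow> du_dx m (pvar k * F) = pdiff (m+k) F + pvar k * du_dx m F"
  unfolding du_dx_def by (simp add: pdiff2_pvar_mult sum.distrib sum_distrib_left mult_if_zero)

lemma normx2_mult: "normx2 m * R = (\<Sum>k<m. pvar k * (pvar k * R))"
  unfolding normx2_def by (simp add: sum_distrib_right power2_eq_square mult.assoc)
lemma normu2_mult: "normu2 m * R = (\<Sum>k<m. pvar (m+k) * (pvar (m+k) * R))"
  unfolding normu2_def by (simp add: sum_distrib_right power2_eq_square mult.assoc)
lemma ux_mult: "ux m * R = (\<Sum>k<m. pvar (m+k) * (pvar k * R))"
  unfolding ux_def by (simp add: sum_distrib_right mult.assoc)

lemma Lap_x_x_du: "Lap_x m (x_du m P) = 2 * du_dx m P + x_du m (Lap_x m P)"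
  unfolding x_du_def Lap_x_sum
  by (simp add: Lap_x_pvar_x_mult Lap_x_pdiff du_dx_def pdiff_commute sum.distrib sum_distrib_left)
lemma Lap_u_x_du: "Lap_u m (x_du m P) = x_du m (Lap_u m P)"
  unfolding x_du_def Lap_u_sum by (simp add: Lap_u_pvar_x_mult Lap_u_pdiff)
lemma Lap_u_u_dx: "Lap_u m (u_dx m P) = 2 * du_dx m P + u_dx m (Lap_u m P)"
  unfolding u_dx_def Lap_u_sum
  by (simp add: Lap_u_pvar_u_mult Lap_u_pdiff du_dx_def sum.distrib sum_distrib_left)
lemma Lap_x_u_dx: "Lap_x m (u_dx m P) = u_dx m (Lap_x m P)"
  unfolding u_dx_def Lap_x_sum by (simp add: Lap_x_pvar_u_mult Lap_x_pdiff)
lemma du_dx_x_du: "du_dx m (x_du m P) = Lap_u m P + x_du m (du_dx m P)"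
  unfolding x_du_def du_dx_sum
  by (simp add: du_dx_pvar_x_mult du_dx_pdiff Lap_u_def sum.distrib sum_distrib_left)

lemma Lap_x_normx2: "Lap_x m (normx2 m * R) = 2 * of_nat m * R + 4 * Eul_x m R + normx2 m * Lap_x m R"
proof -
  have "Lap_x m (normx2 m * R) = (\<Sum>k<m. 2 * R + 4 * (pvar k * pdiff k R) + pvar k * (pvar k * Lap_x m R))"
    unfolding normx2_mult Lap_x_sum
    by (intro sum.cong refl)
      (simp only: lessThan_iff Lap_x_pvar_x_mult pdiff_pvar_mult_same pdiff_add, simp add: algebra_simps)
  then show ?thesis
    by (simp add: Eul_x_def normx2_mult sum.distrib sum_distrib_left)
qed

lemma Lap_u_normu2: "Lap_u m (normu2 m * R) = 2 * of_nat m * R + 4 * Eul_u m R + normu2 m * Lap_u m R"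
proof -
  have "Lap_u m (normu2 m * R) =
      (\<Sum>k<m. 2 * R + 4 * (pvar (m+k) * pdiff (m+k) R) + pvar (m+k) * (pvar (m+k) * Lap_u m R))"
    unfolding normu2_mult Lap_u_sum
    by (intro sum.cong refl)
      (simp only: lessThan_iff Lap_u_pvar_u_mult pdiff_pvar_mult_same pdiff_add, simp add: algebra_simps)
  then show ?thesis
    by (simp add: Eul_u_def normu2_mult sum.distrib sum_distrib_left)
qed

lemma Lap_u_normx2: "Lap_u m (normx2 m * R) = normx2 m * Lap_u m R"
  unfolding normx2_mult Lap_u_sum by (simp add: Lap_u_pvar_x_mult)

lemma Lap_x_normu2: "Lap_x m (normu2 m * R) = normu2 m * Lap_x m R"
  unfolding normu2_mult Lap_x_sum by (simp add: Lap_x_pvar_u_mult)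

lemma Lap_x_ux: "Lap_x m (ux m * P) = 2 * u_dx m P + ux m * Lap_x m P"
proof -
  have "Lap_x m (ux m * P) = (\<Sum>k<m. 2 * (pvar (m+k) * pdiff k P) + pvar (m+k) * (pvar k * Lap_x m P))"
    unfolding ux_mult Lap_x_sum
    by (intro sum.cong refl)
      (simp only: lessThan_iff Lap_x_pvar_u_mult Lap_x_pvar_x_mult, simp add: algebra_simps)
  then show ?thesis
    by (simp add: u_dx_def ux_mult sum.distrib sum_distrib_left)
qed

lemma Lap_u_ux: "Lap_u m (ux m * P) = 2 * x_du m P + ux m * Lap_u m P"
proof -
  have "Lap_u m (ux m * P) = (\<Sum>k<m. 2 * (pvar k * pdiff (m+k) P) + pvar (m+k) * (pvar k * Lap_u m P))"
    unfolding ux_mult Lap_u_sum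
  proof (intro sum.cong refl)
    fix k assume "k \<in> {..<m}"
    then have "k < m" "m + k \<noteq> k" by auto
    then show "Lap_u m (pvar (m+k) * (pvar k * P)) =
        2 * (pvar k * pdiff (m+k) P) + pvar (m+k) * (pvar k * Lap_u m P)"
      by (simp add: Lap_u_pvar_u_mult Lap_u_pvar_x_mult pdiff_pvar_mult_other)
  qed
  then show ?thesis
    by (simp add: x_du_def ux_mult sum.distrib sum_distrib_left)
qed

lemma du_dx_normx2: "du_dx m (normx2 m * R) = 2 * x_du m R + normx2 m * du_dx m R"
proof -
  have "du_dx m (normx2 m * R) = (\<Sum>k<m. 2 * (pvar k * pdiff (m+k) R) + pvar k * (pvar k * du_dx m R))"
    unfolding normx2_mult du_dx_sum
    by (intro sum.cong refl)
      (simp only: lessThan_iff du_dx_pvar_x_mult pdiff_pvar_mult_other pdiff_add, simp add: algebra_simps)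
  then show ?thesis
    by (simp add: x_du_def normx2_mult sum.distrib sum_distrib_left)
qed

lemma Pspace_x_du: "P \<in> Pspace m p q \<Longrightarrow> x_du m P \<in> Pspace m (Suc p) (q - 1)"
  unfolding x_du_def by (intro Pspace_sum Pspace_pvar_x_mult Pspace_pdiff_u) auto
lemma Pspace_u_dx: "P \<in> Pspace m p q \<Longrightarrow> u_dx m P \<in> Pspace m (p - 1) (Suc q)"
  unfolding u_dx_def by (intro Pspace_sum Pspace_pvar_u_mult Pspace_pdiff_x) auto
lemma Pspace_ux_mult: "P \<in> Pspace m p q \<Longrightarrow> ux m * P \<in> Pspace m (Suc p) (Suc q)"
  unfolding ux_mult by (intro Pspace_sum Pspace_pvar_u_mult Pspace_pvar_x_mult) auto

lemma Pspace_normx2_mult: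
  "F \<in> Pspace m (p - 1) q \<Longrightarrow> (p = 0 \<Longrightarrow> F = 0) \<Longrightarrow> normx2 m * F \<in> Pspace m (Suc p) q"
  by (cases p) (auto simp: normx2_mult intro!: Pspace_sum Pspace_pvar_x_mult)
lemma Pspace_normu2_mult:
  "F \<in> Pspace m p (q - 1) \<Longrightarrow> (q = 0 \<Longrightarrow> F = 0) \<Longrightarrow> normu2 m * F \<in> Pspace m p (Suc q)"
  by (cases q) (auto simp: normu2_mult intro!: Pspace_sum Pspace_pvar_u_mult)

lemma x_du_Pspace_u0: "P \<in> Pspace m p 0 \<Longrightarrow> x_du m P = 0"
  unfolding x_du_def by (simp add: pdiff_u_Pspace_u0)
lemma u_dx_Pspace_x0: "P \<in> Pspace m 0 q \<Longrightarrow> u_dx m P = 0"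
  unfolding u_dx_def by (simp add: pdiff_x_Pspace_x0)

lemma du_dx_Pspace_x0: "P \<in> Pspace m 0 q \<Longrightarrow> du_dx m P = 0"
  unfolding du_dx_def by (simp add: pdiff_x_Pspace_x0)

lemma du_dx_Pspace_u0: "P \<in> Pspace m p 0 \<Longrightarrow> du_dx m P = 0"
  unfolding du_dx_def by (subst pdiff_commute) (simp add: pdiff_u_Pspace_u0)

section \<open>Harmonic bihomogeneous polynomials and the projection \<open>\<pi>\<^sub>s\<close>\<close>

definition harm_bideg :: "nat \<Rightarrow> nat \<Rightarrow> nat \<Rightarrow> cpoly set" where
  "harm_bideg m p q = Pspace m p q \<inter> harm m"

lemma harm_bideg_iff:
  "P \<in> harm_bideg m p q \<longleftrightarrow> P \<in> Pspace m p q \<and> Lap_x m P = 0 \<and> Lap_u m P = 0"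
  by (simp add: harm_bideg_def harm_def)

lemma harm_bideg_zero [simp]: "0 \<in> harm_bideg m p q"
  by (simp add: harm_bideg_iff)

lemma harm_bideg_scal: "P \<in> harm_bideg m p q \<Longrightarrow> scal c P \<in> harm_bideg m p q"
  by (simp add: harm_bideg_iff Pspace_scal Lap_x_scal Lap_u_scal)

lemma harm_bideg_du_dx: "P \<in> harm_bideg m p q \<Longrightarrow> du_dx m P \<in> harm_bideg m (p - 1) (q - 1)"
proof -
  assume P: "P \<in> harm_bideg m p q"
  have "du_dx m P \<in> Pspace m (p - 1) (q - 1)"
    using P unfolding du_dx_def harm_bideg_iff by (intro Pspace_sum Pspace_pdiff_u Pspace_pdiff_x) auto
  with P show ?thesis
    by (simp add: harm_bideg_iff Lap_x_du_dx Lap_u_du_dx)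
qed

lemma Lap_x_normx2_harmonic:
  assumes "R \<in> Pspace m p q" "Lap_x m R = 0"
  shows "Lap_x m (normx2 m * R) = scal (2 * of_nat m + 4 * of_nat p) R"
  unfolding Lap_x_normx2 Eul_x_Pspace[OF assms(1)] assms(2)
  by (simp only: mult.assoc, simp only: of_nat_mult_eq_scal,
      simp only: numeral_mult_eq_scal scal_scal scal_add_left, simp add: algebra_simps)

lemma Lap_u_normu2_harmonic:
  assumes "R \<in> Pspace m p q" "Lap_u m R = 0"
  shows "Lap_u m (normu2 m * R) = scal (2 * of_nat m + 4 * of_nat q) R"
  unfolding Lap_u_normu2 Eul_u_Pspace[OF assms(1)] assms(2)
  by (simp only: mult.assoc, simp only: of_nat_mult_eq_scal,
      simp only: numeral_mult_eq_scal scal_scal scal_add_left, simp add: algebra_simps)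

lemma fischer_normx2_mult_left: "fischer (normx2 m * F) Q = fischer F (Lap_x m Q)"
  unfolding normx2_mult Lap_x_def fischer_sum_left fischer_sum_right fischer_pvar_mult_left ..

lemma fischer_normu2_mult_left: "fischer (normu2 m * F) Q = fischer F (Lap_u m Q)"
  unfolding normu2_mult Lap_u_def fischer_sum_left fischer_sum_right fischer_pvar_mult_left ..

lemma fischer_normu2_mult_right: "fischer Q (normu2 m * F) = fischer (Lap_u m Q) F"
  by (subst (1 2) fischer_cnj_commute) (simp add: fischer_normu2_mult_left)

lemma fischer_norm_powers_mult_harmonic:
  assumes "(a, b) \<noteq> (0, 0)" "Lap_x m D = 0" "Lap_u m D = 0"
  shows "fischer (normx2 m ^ a * normu2 m ^ b * G) D = 0"
proof (cases "a = 0")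
  case False
  then have eq: "normx2 m ^ a * normu2 m ^ b * G = normx2 m * (normx2 m ^ (a - 1) * normu2 m ^ b * G)"
    by (simp add: mult.assoc power_eq_if)
  show ?thesis unfolding eq fischer_normx2_mult_left assms(2) by simp
next
  case True
  with assms have eq: "normx2 m ^ a * normu2 m ^ b * G = normu2 m * (normu2 m ^ (b - 1) * G)"
    by (simp add: mult.assoc power_eq_if)
  show ?thesis unfolding eq fischer_normu2_mult_left assms(3) by simp
qed

lemma harm_decomp_unique:
  assumes "\<And>a b. a \<le> A \<Longrightarrow> b \<le> B \<Longrightarrow> Hs a b - Hs' a b \<in> harm m"
    and "(\<Sum>a\<le>A. \<Sum>b\<le>B. normx2 m ^ a * normu2 m ^ b * Hs a b) =
         (\<Sum>a\<le>A. \<Sum>b\<le>B. normx2 m ^ a * normu2 m ^ b * Hs' a b)"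
  shows "Hs 0 0 = Hs' 0 0"
proof -
  define f where "f = (\<lambda>(a,b). normx2 m ^ a * normu2 m ^ b * (Hs a b - Hs' a b))"
  define S where "S = {..A} \<times> {..B}"
  define D where "D = Hs 0 0 - Hs' 0 0"
  have D: "Lap_x m D = 0" "Lap_u m D = 0"
    using assms(1)[of 0 0] by (simp_all add: D_def harm_def)
  have "(\<Sum>ab\<in>S. f ab) = 0"
    using assms(2) unfolding S_def f_def sum.cartesian_product[symmetric]
    by (simp add: right_diff_distrib sum_subtractf del: sum.cartesian_product)
  then have Deq: "D = - (\<Sum>ab\<in>S - {(0,0)}. f ab)"
    using sum.remove[of S "(0,0)" f] by (simp add: S_def f_def D_def eq_neg_iff_add_eq_0)
  have orth: "fischer (f ab) D = 0" if "ab \<in> S - {(0,0)}" for ab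
  proof -
    obtain a b where "ab = (a, b)" by (cases ab)
    with that D show ?thesis by (simp add: f_def fischer_norm_powers_mult_harmonic)
  qed
  have "fischer D D = fischer (- (\<Sum>ab\<in>S - {(0,0)}. f ab)) D"
    using Deq by (rule arg_cong)
  also have "\<dots> = - (\<Sum>ab\<in>S - {(0,0)}. fischer (f ab) D)"
    by (simp only: fischer_uminus_left fischer_sum_left)
  also have "\<dots> = 0"
    using orth by simp
  finally have "fischer D D = 0" .
  then have "D = 0" by (rule fischer_self_eq_0D)
  then show ?thesis by (simp add: D_def)
qed

lemma sum_atMost_eq_first_two:
  fixes A :: nat
  assumes "\<And>a. 2 \<le> a \<Longrightarrow> g a = (0::'a::comm_monoid_add)" "A = 0 \<Longrightarrow> g 1 = 0"
  shows "(\<Sum>a\<le>A. g a) = g 0 + g 1"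
proof (cases A)
  case 0 then show ?thesis using assms(2) by simp
next
  case (Suc n)
  have "(\<Sum>a\<le>A. g a) = (\<Sum>a\<le>1. g a)"
    by (rule sum.mono_neutral_right) (use Suc assms(1) in auto)
  then show ?thesis by simp
qed

text \<open>The hypotheses for small degrees make the four pieces fit the index ranges
  \<open>a \<le> p div 2\<close>, \<open>b \<le> q div 2\<close> in the definition of \<open>\<pi>\<^sub>s\<close>.\<close>

lemma pi_s_eq:
  assumes H: "H \<in> harm_bideg m p q" and X1: "X1 \<in> harm_bideg m (p - 2) q"
    and X2: "X2 \<in> harm_bideg m p (q - 2)" and X3: "X3 \<in> harm_bideg m (p - 2) (q - 2)"
    and z1: "p < 2 \<Longrightarrow> X1 = 0" and z2: "q < 2 \<Longrightarrow> X2 = 0" and z3: "p < 2 \<or> q < 2 \<Longrightarrow> X3 = 0"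
  shows "pi_s m p q (H + normx2 m * X1 + normu2 m * X2 + normx2 m * (normu2 m * X3)) = H"
proof -
  let ?Y = "H + normx2 m * X1 + normu2 m * X2 + normx2 m * (normu2 m * X3)"
  let ?decomp = "\<lambda>H' Hs. (\<forall>a\<le>p div 2. \<forall>b\<le>q div 2. Hs a b \<in> Pspace m (p - 2*a) (q - 2*b) \<inter> harm m)
      \<and> ?Y = (\<Sum>a\<le>p div 2. \<Sum>b\<le>q div 2. normx2 m ^ a * normu2 m ^ b * Hs a b) \<and> H' = Hs 0 0"
  define Hs where "Hs a b = (if a = 0 \<and> b = 0 then H else if a = 1 \<and> b = 0 then X1
      else if a = 0 \<and> b = 1 then X2 else if a = 1 \<and> b = 1 then X3 else 0)" for a b :: nat
  have div2: "(n::nat) div 2 = 0 \<longleftrightarrow> n < 2" for n by auto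
  have mem: "Hs a b \<in> Pspace m (p - 2*a) (q - 2*b) \<inter> harm m" for a b
    using H X1 X2 X3 by (auto simp: Hs_def harm_bideg_def harm_def)
  have inner: "(\<Sum>b\<le>q div 2. normx2 m ^ a * normu2 m ^ b * Hs a b) =
      normx2 m ^ a * Hs a 0 + normx2 m ^ a * normu2 m * Hs a 1" for a
    by (subst sum_atMost_eq_first_two) (use z2 z3 in \<open>auto simp: Hs_def div2\<close>)
  have "(\<Sum>a\<le>p div 2. \<Sum>b\<le>q div 2. normx2 m ^ a * normu2 m ^ b * Hs a b) = ?Y"
    unfolding inner
    by (subst sum_atMost_eq_first_two) (use z1 z3 in \<open>auto simp: Hs_def div2 algebra_simps\<close>)
  with mem have dec: "?decomp H Hs"
    by (simp add: Hs_def)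
  have uniq: "H' = H" if "\<exists>Hs. ?decomp H' Hs" for H'
  proof -
    from that obtain Hs' where dec': "?decomp H' Hs'" by blast
    have "Hs' 0 0 = Hs 0 0"
      using dec dec' by (intro harm_decomp_unique[of "p div 2" "q div 2"]) (auto simp: harm_def Lap_x_diff Lap_u_diff)
    with dec dec' show ?thesis by simp
  qed
  show ?thesis
    unfolding pi_s_def by (rule the_equality) (use dec uniq in blast)+
qed

lemma pi_s_harm_bideg: "H \<in> harm_bideg m p q \<Longrightarrow> pi_s m p q H = H"
  using pi_s_eq[of H m p q 0 0 0] by simp

section \<open>Explicit formulas for \<open>S\<^sub>x\<close>, \<open>S\<^sub>u\<close>, \<open>A\<close> and \<open>C\<close>\<close>

definition norm_corr :: "nat \<Rightarrow> nat \<Rightarrow> real" where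
  "norm_corr m p = 1 / (real m + 2 * real p - 2)"

lemma norm_corr_eq:
  assumes "0 < m" "1 \<le> p"
  shows "(2 * of_nat m + 4 * of_nat (p - 1)) * complex_of_real (norm_corr m p) = 2"
proof -
  have "(2 * real m + 4 * real (p - 1)) * norm_corr m p = 2"
    using assms by (simp add: norm_corr_def of_nat_diff field_simps)
  then have "complex_of_real ((2 * real m + 4 * real (p - 1)) * norm_corr m p) = 2" by simp
  then show ?thesis by simp
qed

lemma A_op_eq: "P \<in> harm_bideg m p q \<Longrightarrow> A_op m p q P = du_dx m P"
  unfolding A_op_def by (rule pi_s_harm_bideg[OF harm_bideg_du_dx])

lemma S_x_harm_part:
  assumes m: "0 < m" and P: "P \<in> harm_bideg m p q"
  shows "x_du m P - normx2 m * scal (norm_corr m p) (du_dx m P) \<in> harm_bideg m (Suc p) (q - 1)"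
proof -
  let ?a = "complex_of_real (norm_corr m p)"
  define R where "R = du_dx m P"
  have R: "R \<in> harm_bideg m (p - 1) (q - 1)" unfolding R_def by (rule harm_bideg_du_dx[OF P])
  have Ph: "P \<in> Pspace m p q" "Lap_x m P = 0" "Lap_u m P = 0" using P by (simp_all add: harm_bideg_iff)
  show ?thesis
  proof (cases "p = 0")
    case True
    then have "R = 0" unfolding R_def using Ph du_dx_Pspace_x0 by simp
    then have "Lap_x m (x_du m P) = 0" "Lap_u m (x_du m P) = 0"
      using Ph by (simp_all add: Lap_x_x_du Lap_u_x_du flip: R_def)
    moreover have "x_du m P \<in> Pspace m (Suc p) (q - 1)" using Ph(1) by (rule Pspace_x_du)
    ultimately show ?thesis using \<open>R = 0\<close> by (simp add: harm_bideg_iff R_def)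
  next
    case False
    have aR: "scal ?a R \<in> harm_bideg m (p - 1) (q - 1)" by (rule harm_bideg_scal[OF R])
    have "Lap_x m (normx2 m * scal ?a R) = scal (2 * of_nat m + 4 * of_nat (p - 1)) (scal ?a R)"
      using aR unfolding harm_bideg_iff by (intro Lap_x_normx2_harmonic[of _ m "p - 1" "q - 1"]) auto
    then have "Lap_x m (x_du m P - normx2 m * scal ?a R) =
        2 * R - scal ((2 * of_nat m + 4 * of_nat (p - 1)) * ?a) R"
      using Ph by (simp add: Lap_x_diff Lap_x_x_du R_def)
    also have "\<dots> = 0" using norm_corr_eq[OF m] False by (simp add: numeral_mult_eq_scal)
    finally have "Lap_x m (x_du m P - normx2 m * scal ?a R) = 0" .
    moreover have "Lap_u m (x_du m P - normx2 m * scal ?a R) = 0"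
      using Ph aR by (simp add: Lap_u_diff Lap_u_x_du Lap_u_normx2 harm_bideg_iff)
    moreover have "x_du m P - normx2 m * scal ?a R \<in> Pspace m (Suc p) (q - 1)"
      using aR Ph False by (intro Pspace_diff Pspace_x_du Pspace_normx2_mult) (auto simp: harm_bideg_iff)
    ultimately show ?thesis by (simp add: harm_bideg_iff R_def)
  qed
qed

lemma S_x_eq:
  assumes "0 < m" "P \<in> harm_bideg m p q"
  shows "S_x m p q P = x_du m P - normx2 m * scal (norm_corr m p) (du_dx m P)"
proof -
  let ?X = "scal (norm_corr m p) (du_dx m P)"
  have "?X \<in> harm_bideg m (Suc p - 2) (q - 1)"
    using harm_bideg_scal[OF harm_bideg_du_dx[OF assms(2)]] by simp
  moreover have "Suc p < 2 \<Longrightarrow> ?X = 0"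
    using assms(2) du_dx_Pspace_x0[of P m q] by (simp add: harm_bideg_iff)
  ultimately have "pi_s m (Suc p) (q - 1) (x_du m P - normx2 m * ?X + normx2 m * ?X + normu2 m * 0
      + normx2 m * (normu2 m * 0)) = x_du m P - normx2 m * ?X"
    by (intro pi_s_eq S_x_harm_part assms) simp_all
  then show ?thesis by (simp add: S_x_def)
qed

lemma S_u_harm_part:
  assumes m: "0 < m" and P: "P \<in> harm_bideg m p q"
  shows "u_dx m P - normu2 m * scal (norm_corr m q) (du_dx m P) \<in> harm_bideg m (p - 1) (Suc q)"
proof -
  let ?a = "complex_of_real (norm_corr m q)"
  define R where "R = du_dx m P"
  have R: "R \<in> harm_bideg m (p - 1) (q - 1)" unfolding R_def by (rule harm_bideg_du_dx[OF P])
  have Ph: "P \<in> Pspace m p q" "Lap_x m P = 0" "Lap_u m P = 0" using P by (simp_all add: harm_bideg_iff)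
  show ?thesis
  proof (cases "q = 0")
    case True
    then have "R = 0" unfolding R_def using Ph du_dx_Pspace_u0 by simp
    then have "Lap_x m (u_dx m P) = 0" "Lap_u m (u_dx m P) = 0"
      using Ph by (simp_all add: Lap_u_u_dx Lap_x_u_dx flip: R_def)
    moreover have "u_dx m P \<in> Pspace m (p - 1) (Suc q)" using Ph(1) by (rule Pspace_u_dx)
    ultimately show ?thesis using \<open>R = 0\<close> by (simp add: harm_bideg_iff R_def)
  next
    case False
    have aR: "scal ?a R \<in> harm_bideg m (p - 1) (q - 1)" by (rule harm_bideg_scal[OF R])
    have "Lap_u m (normu2 m * scal ?a R) = scal (2 * of_nat m + 4 * of_nat (q - 1)) (scal ?a R)"
      using aR unfolding harm_bideg_iff by (intro Lap_u_normu2_harmonic[of _ m "p - 1" "q - 1"]) auto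
    then have "Lap_u m (u_dx m P - normu2 m * scal ?a R) =
        2 * R - scal ((2 * of_nat m + 4 * of_nat (q - 1)) * ?a) R"
      using Ph by (simp add: Lap_u_diff Lap_u_u_dx R_def)
    also have "\<dots> = 0" using norm_corr_eq[OF m] False by (simp add: numeral_mult_eq_scal)
    finally have "Lap_u m (u_dx m P - normu2 m * scal ?a R) = 0" .
    moreover have "Lap_x m (u_dx m P - normu2 m * scal ?a R) = 0"
      using Ph aR by (simp add: Lap_x_diff Lap_x_u_dx Lap_x_normu2 harm_bideg_iff)
    moreover have "u_dx m P - normu2 m * scal ?a R \<in> Pspace m (p - 1) (Suc q)"
      using aR Ph False by (intro Pspace_diff Pspace_u_dx Pspace_normu2_mult) (auto simp: harm_bideg_iff)
    ultimately show ?thesis by (simp add: harm_bideg_iff R_def)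
  qed
qed

lemma S_u_eq:
  assumes "0 < m" "P \<in> harm_bideg m p q"
  shows "S_u m p q P = u_dx m P - normu2 m * scal (norm_corr m q) (du_dx m P)"
proof -
  let ?X = "scal (norm_corr m q) (du_dx m P)"
  have "?X \<in> harm_bideg m (p - 1) (Suc q - 2)"
    using harm_bideg_scal[OF harm_bideg_du_dx[OF assms(2)]] by simp
  moreover have "Suc q < 2 \<Longrightarrow> ?X = 0"
    using assms(2) du_dx_Pspace_u0[of P m p] by (simp add: harm_bideg_iff)
  ultimately have "pi_s m (p - 1) (Suc q) (u_dx m P - normu2 m * ?X + normx2 m * 0 + normu2 m * ?X
      + normx2 m * (normu2 m * 0)) = u_dx m P - normu2 m * ?X"
    by (intro pi_s_eq S_u_harm_part assms) simp_all
  then show ?thesis by (simp add: S_u_def)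
qed

lemma S_x_harm_bideg:
  assumes "0 < m" "P \<in> harm_bideg m p q"
  shows "S_x m p q P \<in> harm_bideg m (Suc p) (q - 1)"
  unfolding S_x_eq[OF assms] by (rule S_x_harm_part[OF assms])

lemma S_u_harm_bideg:
  assumes "0 < m" "P \<in> harm_bideg m p q"
  shows "S_u m p q P \<in> harm_bideg m (p - 1) (Suc q)"
  unfolding S_u_eq[OF assms] by (rule S_u_harm_part[OF assms])

lemma A_op_harm_bideg: "P \<in> harm_bideg m p q \<Longrightarrow> A_op m p q P \<in> harm_bideg m (p - 1) (q - 1)"
  unfolding A_op_eq by (rule harm_bideg_du_dx)

lemma S_x_harm_bideg_u0: "0 < m \<Longrightarrow> P \<in> harm_bideg m p 0 \<Longrightarrow> S_x m p 0 P = 0"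
  using S_x_eq[of m P p 0] x_du_Pspace_u0[of P m p] du_dx_Pspace_u0[of P m p]
  by (simp add: harm_bideg_iff)
lemma S_u_harm_bideg_x0: "0 < m \<Longrightarrow> P \<in> harm_bideg m 0 q \<Longrightarrow> S_u m 0 q P = 0"
  using S_u_eq[of m P 0 q] u_dx_Pspace_x0[of P m q] du_dx_Pspace_x0[of P m q]
  by (simp add: harm_bideg_iff)

text \<open>For \<open>C\<close> the correction terms are built from \<open>S\<^sub>u\<close>, \<open>S\<^sub>x\<close> and \<open>A\<close> themselves:
  \<open>\<langle>u,x\<rangle>P = H + |x|\<^sup>2 a S\<^sub>uP + |u|\<^sup>2 b S\<^sub>xP + |x|\<^sup>2|u|\<^sup>2 ab AP\<close> with \<open>H\<close> harmonic.\<close>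

context
  fixes m p q :: nat and P :: cpoly
  assumes m: "0 < m" and P: "P \<in> harm_bideg m p q"
begin

definition C_corr_x :: cpoly where
  "C_corr_x = scal (norm_corr m p) (S_u m p q P)"

definition C_corr_u :: cpoly where
  "C_corr_u = scal (norm_corr m q) (S_x m p q P)"

definition C_corr_xu :: cpoly where
  "C_corr_xu = scal (norm_corr m p * norm_corr m q) (du_dx m P)"

definition C_harm_part :: cpoly where
  "C_harm_part = ux m * P - normx2 m * C_corr_x - normu2 m * C_corr_u
     - normx2 m * (normu2 m * C_corr_xu)"

lemma C_corr_harm_bideg:
  "C_corr_x \<in> harm_bideg m (p - 1) (Suc q)"
  "C_corr_u \<in> harm_bideg m (Suc p) (q - 1)"
  "C_corr_xu \<in> harm_bideg m (p - 1) (q - 1)"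
  unfolding C_corr_x_def C_corr_u_def C_corr_xu_def
  by (intro harm_bideg_scal S_u_harm_bideg S_x_harm_bideg harm_bideg_du_dx m P)+

lemma C_corr_vanish:
  "p = 0 \<Longrightarrow> C_corr_x = 0" "q = 0 \<Longrightarrow> C_corr_u = 0" "p = 0 \<or> q = 0 \<Longrightarrow> C_corr_xu = 0"
  unfolding C_corr_x_def C_corr_u_def C_corr_xu_def
  using P S_u_harm_bideg_x0[OF m, of P q] S_x_harm_bideg_u0[OF m, of P p]
    du_dx_Pspace_x0[of P m q] du_dx_Pspace_u0[of P m p]
  by (auto simp: harm_bideg_iff)

lemma Pspace_normu2_C_corr_xu: "normu2 m * C_corr_xu \<in> Pspace m (p - 1) (Suc q)"
  using C_corr_harm_bideg(3) C_corr_vanish(3)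
  by (intro Pspace_normu2_mult) (auto simp: harm_bideg_iff)

lemma Pspace_normx2_C_corr_xu: "normx2 m * C_corr_xu \<in> Pspace m (Suc p) (q - 1)"
  using C_corr_harm_bideg(3) C_corr_vanish(3)
  by (intro Pspace_normx2_mult) (auto simp: harm_bideg_iff)

lemma C_harm_part_Pspace: "C_harm_part \<in> Pspace m (Suc p) (Suc q)"
proof -
  have "normx2 m * C_corr_x \<in> Pspace m (Suc p) (Suc q)"
    using C_corr_harm_bideg(1) C_corr_vanish(1) by (intro Pspace_normx2_mult) (auto simp: harm_bideg_iff)
  moreover have "normu2 m * C_corr_u \<in> Pspace m (Suc p) (Suc q)"
    using C_corr_harm_bideg(2) C_corr_vanish(2) by (intro Pspace_normu2_mult) (auto simp: harm_bideg_iff)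
  moreover have "normx2 m * (normu2 m * C_corr_xu) \<in> Pspace m (Suc p) (Suc q)"
    using Pspace_normu2_C_corr_xu C_corr_vanish(3) by (intro Pspace_normx2_mult) auto
  ultimately show ?thesis
    using P unfolding C_harm_part_def by (intro Pspace_diff Pspace_ux_mult) (auto simp: harm_bideg_iff)
qed

lemma Lap_x_C_harm_part: "Lap_x m C_harm_part = 0"
proof (cases "p = 0")
  case True
  have "u_dx m P = 0" using True P u_dx_Pspace_x0[of P m q] by (simp add: harm_bideg_iff)
  moreover have "C_corr_x = 0" "C_corr_xu = 0" using C_corr_vanish(1,3) True by blast+
  ultimately show ?thesis
    using P C_corr_harm_bideg(2)
    by (simp add: C_harm_part_def Lap_x_diff Lap_x_ux Lap_x_normu2 harm_bideg_iff)
next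
  case False
  let ?a = "complex_of_real (norm_corr m p)" and ?b = "complex_of_real (norm_corr m q)"
  let ?ev = "2 * of_nat m + 4 * of_nat (p - 1) :: complex"
  have ev: "?ev * ?a = 2" using norm_corr_eq[OF m] False by simp
  have "Lap_x m (normx2 m * C_corr_x) = scal ?ev C_corr_x"
    using C_corr_harm_bideg(1) unfolding harm_bideg_iff
    by (intro Lap_x_normx2_harmonic[of _ m "p - 1" "Suc q"]) auto
  also have "\<dots> = scal 2 (u_dx m P - normu2 m * scal ?b (du_dx m P))"
    using ev by (simp add: C_corr_x_def S_u_eq[OF m P])
  finally have x: "Lap_x m (normx2 m * C_corr_x) = scal 2 (u_dx m P) - normu2 m * scal (2 * ?b) (du_dx m P)"
    by (simp add: scal_diff mult_scal)
  have "Lap_x m (normx2 m * (normu2 m * C_corr_xu)) = scal ?ev (normu2 m * C_corr_xu)"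
    using Pspace_normu2_C_corr_xu C_corr_harm_bideg(3)
    by (intro Lap_x_normx2_harmonic) (simp_all add: Lap_x_normu2 harm_bideg_iff)
  also have "\<dots> = normu2 m * scal (2 * ?b) (du_dx m P)"
  proof -
    have coeff: "?ev * (?a * ?b) = 2 * ?b" using ev by (metis mult.assoc)
    then show ?thesis by (simp only: C_corr_xu_def mult_scal scal_scal of_real_mult coeff)
  qed
  finally have xu: "Lap_x m (normx2 m * (normu2 m * C_corr_xu)) = normu2 m * scal (2 * ?b) (du_dx m P)" .
  have "Lap_x m (normu2 m * C_corr_u) = 0"
    using C_corr_harm_bideg(2) by (simp add: Lap_x_normu2 harm_bideg_iff)
  with x xu P show ?thesis
    by (simp add: C_harm_part_def Lap_x_diff Lap_x_ux harm_bideg_iff numeral_mult_eq_scal)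
qed

lemma Lap_u_C_harm_part: "Lap_u m C_harm_part = 0"
proof (cases "q = 0")
  case True
  have "x_du m P = 0" using True P x_du_Pspace_u0[of P m p] by (simp add: harm_bideg_iff)
  moreover have "C_corr_u = 0" "C_corr_xu = 0" using C_corr_vanish(2,3) True by blast+
  ultimately show ?thesis
    using P C_corr_harm_bideg(1)
    by (simp add: C_harm_part_def Lap_u_diff Lap_u_ux Lap_u_normx2 harm_bideg_iff)
next
  case False
  let ?a = "complex_of_real (norm_corr m p)" and ?b = "complex_of_real (norm_corr m q)"
  let ?ev = "2 * of_nat m + 4 * of_nat (q - 1) :: complex"
  have ev: "?ev * ?b = 2" using norm_corr_eq[OF m] False by simp
  have "Lap_u m (normu2 m * C_corr_u) = scal ?ev C_corr_u"
    using C_corr_harm_bideg(2) unfolding harm_bideg_iff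
    by (intro Lap_u_normu2_harmonic[of _ m "Suc p" "q - 1"]) auto
  also have "\<dots> = scal 2 (x_du m P - normx2 m * scal ?a (du_dx m P))"
    using ev by (simp add: C_corr_u_def S_x_eq[OF m P])
  finally have u: "Lap_u m (normu2 m * C_corr_u) = scal 2 (x_du m P) - normx2 m * scal (2 * ?a) (du_dx m P)"
    by (simp add: scal_diff mult_scal)
  have "Lap_u m (normx2 m * (normu2 m * C_corr_xu)) = Lap_u m (normu2 m * (normx2 m * C_corr_xu))"
    by (simp only: mult.left_commute)
  also have "\<dots> = scal ?ev (normx2 m * C_corr_xu)"
    using Pspace_normx2_C_corr_xu C_corr_harm_bideg(3)
    by (intro Lap_u_normu2_harmonic) (simp_all add: Lap_u_normx2 harm_bideg_iff)
  also have "\<dots> = normx2 m * scal (2 * ?a) (du_dx m P)"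
  proof -
    have coeff: "?ev * (?a * ?b) = 2 * ?a" using ev by (metis mult.assoc mult.commute)
    then show ?thesis by (simp only: C_corr_xu_def mult_scal scal_scal of_real_mult coeff)
  qed
  finally have xu: "Lap_u m (normx2 m * (normu2 m * C_corr_xu)) = normx2 m * scal (2 * ?a) (du_dx m P)" .
  have "Lap_u m (normx2 m * C_corr_x) = 0"
    using C_corr_harm_bideg(1) by (simp add: Lap_u_normx2 harm_bideg_iff)
  with u xu P show ?thesis
    by (simp add: C_harm_part_def Lap_u_diff Lap_u_ux harm_bideg_iff numeral_mult_eq_scal)
qed

lemma C_op_eq: "C_op m p q P = C_harm_part"
proof -
  have "ux m * P = C_harm_part + normx2 m * C_corr_x + normu2 m * C_corr_u
      + normx2 m * (normu2 m * C_corr_xu)"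
    by (simp add: C_harm_part_def)
  moreover have "C_harm_part \<in> harm_bideg m (Suc p) (Suc q)"
    by (simp add: harm_bideg_iff C_harm_part_Pspace Lap_x_C_harm_part Lap_u_C_harm_part)
  ultimately show ?thesis
    unfolding C_op_def using C_corr_harm_bideg C_corr_vanish by (auto intro: pi_s_eq)
qed

lemma C_op_harm_bideg: "C_op m p q P \<in> harm_bideg m (Suc p) (Suc q)"
  by (simp add: C_op_eq harm_bideg_iff C_harm_part_Pspace Lap_x_C_harm_part Lap_u_C_harm_part)

lemma fischer_C_op_left: "Q \<in> harm m \<Longrightarrow> fischer (C_op m p q P) Q = fischer (ux m * P) Q"
  by (simp add: C_op_eq C_harm_part_def fischer_diff_left fischer_normx2_mult_left
      fischer_normu2_mult_left harm_def)

end

section \<open>Adjointness and commutation\<close>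

lemma fischer_ux_mult_left: "fischer (ux m * P) Q = fischer P (du_dx m Q)"
  unfolding ux_mult du_dx_def fischer_sum_left fischer_sum_right fischer_pvar_mult_left
  by (simp add: pdiff_commute)

lemma fischer_x_du_left: "fischer (x_du m P) Q = fischer P (u_dx m Q)"
  unfolding x_du_def u_dx_def fischer_sum_left fischer_sum_right fischer_pvar_mult_left
    fischer_pvar_mult_right ..

lemma fischer_C_op_A_op:
  assumes "0 < m" "P \<in> harm_bideg m p q" "Q \<in> harm_bideg m (Suc p) (Suc q)"
  shows "fischer (C_op m p q P) Q = fischer P (A_op m (Suc p) (Suc q) Q)"
  using assms by (simp add: fischer_C_op_left harm_bideg_def fischer_ux_mult_left A_op_eq)

lemma fischer_S_x_S_u:
  assumes m: "0 < m" and P: "P \<in> harm_bideg m p q" and Q: "Q \<in> harm_bideg m (Suc p) (q - 1)"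
  shows "fischer (S_x m p q P) Q = fischer P (S_u m (Suc p) (q - 1) Q)"
proof -
  have harmonic: "Lap_x m Q = 0" "Lap_u m P = 0" using P Q by (simp_all add: harm_bideg_iff)
  have "fischer (S_x m p q P) Q = fischer (x_du m P) Q"
    unfolding S_x_eq[OF m P] fischer_diff_left fischer_normx2_mult_left harmonic by simp
  also have "\<dots> = fischer P (u_dx m Q)"
    by (rule fischer_x_du_left)
  also have "\<dots> = fischer P (S_u m (Suc p) (q - 1) Q)"
    unfolding S_u_eq[OF m Q] fischer_diff_right fischer_normu2_mult_right harmonic by simp
  finally show ?thesis .
qed

lemma fischer_S_u_S_x:
  assumes m: "0 < m" and P: "P \<in> harm_bideg m p q" and Q: "Q \<in> harm_bideg m (p - 1) (Suc q)"
    and p: "1 \<le> p"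
  shows "fischer (S_u m p q P) Q = fischer P (S_x m (p - 1) (Suc q) Q)"
proof -
  have "P \<in> harm_bideg m (Suc (p - 1)) (Suc q - 1)" using P p by simp
  from fischer_S_x_S_u[OF m Q this] p show ?thesis
    by (metis Suc_diff_le diff_Suc_1 diff_Suc_Suc fischer_cnj_commute minus_nat.diff_0)
qed

definition comm_coeff :: "nat \<Rightarrow> nat \<Rightarrow> real" where
  "comm_coeff m p = (real m + 2 * real p - 4) / (real m + 2 * real p - 2)"

lemma comm_coeff_eqs:
  assumes "2 < m" "1 \<le> p"
  shows "1 - 2 * complex_of_real (norm_corr m p) = complex_of_real (comm_coeff m p)"
    and "complex_of_real (comm_coeff m p) * complex_of_real (norm_corr m (p - 1)) =
         complex_of_real (norm_corr m p)"
proof -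
  have pos: "real m + 2 * real p - 2 > 0" "real m + 2 * real p - 4 > 0" using assms by auto
  have "1 - 2 * norm_corr m p = comm_coeff m p"
    using pos by (simp add: norm_corr_def comm_coeff_def field_simps)
  then show "1 - 2 * complex_of_real (norm_corr m p) = complex_of_real (comm_coeff m p)"
    by (metis of_real_1 of_real_diff of_real_mult of_real_numeral)
  have "comm_coeff m p * norm_corr m (p - 1) = norm_corr m p"
    using pos assms by (simp add: norm_corr_def comm_coeff_def of_nat_diff field_simps)
  then show "complex_of_real (comm_coeff m p) * complex_of_real (norm_corr m (p - 1)) =
      complex_of_real (norm_corr m p)"
    by (metis of_real_mult)
qed

lemma A_op_S_x_commute:
  assumes m: "2 < m" and P: "P \<in> harm_bideg m p q" and p: "1 \<le> p"
  shows "A_op m (Suc p) (q - 1) (S_x m p q P) = scal (comm_coeff m p) (S_x m (p - 1) (q - 1) (A_op m p q P))"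
proof -
  have m0: "0 < m" using m by simp
  define a where "a = complex_of_real (norm_corr m p)"
  define R where "R = du_dx m P"
  have R: "R \<in> harm_bideg m (p - 1) (q - 1)" unfolding R_def by (rule harm_bideg_du_dx[OF P])
  have "Lap_u m P = 0" using P by (simp add: harm_bideg_iff)
  then have "A_op m (Suc p) (q - 1) (S_x m p q P) = x_du m R - scal (2 * a) (x_du m R) - normx2 m * scal a (du_dx m R)"
    unfolding A_op_eq[OF S_x_harm_bideg[OF m0 P]]
    unfolding S_x_eq[OF m0 P] du_dx_diff du_dx_x_du du_dx_normx2
    by (simp add: a_def R_def du_dx_scal x_du_scal numeral_mult_eq_scal mult_scal mult.commute[where 'a=complex])
  also have "\<dots> = scal (comm_coeff m p) (x_du m R) - normx2 m * scal (comm_coeff m p * norm_corr m (p - 1)) (du_dx m R)"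
  proof -
    have "x_du m R - scal (2 * a) (x_du m R) = scal (comm_coeff m p) (x_du m R)"
      by (metis scal_one scal_diff_left comm_coeff_eqs(1)[OF m p] a_def)
    then show ?thesis using comm_coeff_eqs(2)[OF m p] by (simp add: a_def)
  qed
  also have "\<dots> = scal (comm_coeff m p) (S_x m (p - 1) (q - 1) (A_op m p q P))"
    unfolding A_op_eq[OF P] S_x_eq[OF m0 R[unfolded R_def]]
    by (simp add: R_def scal_diff mult_scal)
  finally show ?thesis .
qed

lemma A_op_scal: "W \<in> harm_bideg m p q \<Longrightarrow> A_op m p q (scal c W) = scal c (A_op m p q W)"
  by (simp add: A_op_eq harm_bideg_scal du_dx_scal)

lemma S_x_scal: "0 < m \<Longrightarrow> W \<in> harm_bideg m p q \<Longrightarrow> S_x m p q (scal c W) = scal c (S_x m p q W)"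
  by (simp add: S_x_eq harm_bideg_scal du_dx_scal x_du_scal scal_diff mult_scal mult.commute[where 'a=complex])

lemma harm_operators_zero [simp]: "A_op m p q 0 = 0" "S_u m p q 0 = 0" "C_op m p q 0 = 0" "S_x m p q 0 = 0"
  by (simp_all add: A_op_def S_u_def C_op_def S_x_def pi_s_harm_bideg)

lemma harm_operator_powers_zero [simp]:
  "A_pow m n p q 0 = 0" "S_u_pow m n p q 0 = 0" "C_pow m n p q 0 = 0" "S_x_pow m n p q 0 = 0"
  by (induction n) simp_all

lemma A_pow_Suc': "A_pow m (Suc n) p q X = A_pow m n (p - 1) (q - 1) (A_op m p q X)"
proof (induction n)
  case (Suc n)
  have "p - Suc n = p - 1 - n" "q - Suc n = q - 1 - n" by arith+
  then show ?case using Suc.IH by (simp only: A_pow.simps)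
qed simp

lemma S_x_pow_Suc': "S_x_pow m (Suc n) p q X = S_x_pow m n (Suc p) (q - 1) (S_x m p q X)"
proof (induction n)
  case (Suc n)
  have "p + Suc n = Suc p + n" "q - Suc n = q - 1 - n" by arith+
  then show ?case using Suc.IH by (simp only: S_x_pow.simps)
qed simp

lemma S_x_pow_harm_bideg:
  "0 < m \<Longrightarrow> X \<in> harm_bideg m p q \<Longrightarrow> S_x_pow m n p q X \<in> harm_bideg m (p + n) (q - n)"
proof (induction n)
  case (Suc n)
  then show ?case using S_x_harm_bideg[OF Suc.prems(1) Suc.IH[OF Suc.prems]] by simp
qed simp

lemma S_u_pow_harm_bideg:
  "0 < m \<Longrightarrow> X \<in> harm_bideg m p q \<Longrightarrow> S_u_pow m n p q X \<in> harm_bideg m (p - n) (q + n)"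
proof (induction n)
  case (Suc n)
  then show ?case using S_u_harm_bideg[OF Suc.prems(1) Suc.IH[OF Suc.prems]] by simp
qed simp

lemma A_pow_harm_bideg: "X \<in> harm_bideg m p q \<Longrightarrow> A_pow m n p q X \<in> harm_bideg m (p - n) (q - n)"
proof (induction n)
  case (Suc n)
  then show ?case using A_op_harm_bideg[OF Suc.IH[OF Suc.prems]] by simp
qed simp

lemma C_pow_harm_bideg:
  "0 < m \<Longrightarrow> X \<in> harm_bideg m p q \<Longrightarrow> C_pow m n p q X \<in> harm_bideg m (p + n) (q + n)"
proof (induction n)
  case (Suc n)
  then show ?case using C_op_harm_bideg[OF Suc.prems(1) Suc.IH[OF Suc.prems]] by simp
qed simp

lemma A_pow_vanish:
  assumes "X \<in> harm_bideg m p q" "q < n"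
  shows "A_pow m n p q X = 0"
  using assms(2)
proof (induction n)
  case (Suc n)
  show ?case
  proof (cases "q < n")
    case False
    then have "n = q" using Suc.prems by simp
    moreover have "A_pow m q p q X \<in> harm_bideg m (p - q) 0"
      using A_pow_harm_bideg[OF assms(1), of q] by simp
    ultimately show ?thesis
      using du_dx_Pspace_u0[of "A_pow m q p q X" m "p - q"] by (simp add: A_op_eq harm_bideg_iff)
  qed (simp add: Suc.IH)
qed simp

lemma fischer_C_pow_A_pow:
  assumes m: "0 < m" and Y: "Y \<in> harm_bideg m p q"
  shows "Q \<in> harm_bideg m (p + n) (q + n) \<Longrightarrow>
    fischer (C_pow m n p q Y) Q = fischer Y (A_pow m n (p + n) (q + n) Q)"
proof (induction n arbitrary: Q)
  case (Suc n)
  have W: "C_pow m n p q Y \<in> harm_bideg m (p + n) (q + n)" by (rule C_pow_harm_bideg[OF m Y])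
  have Q: "Q \<in> harm_bideg m (Suc (p + n)) (Suc (q + n))" using Suc.prems by simp
  have AQ: "A_op m (Suc (p + n)) (Suc (q + n)) Q \<in> harm_bideg m (p + n) (q + n)"
    using A_op_harm_bideg[OF Q] by simp
  have "fischer (C_pow m (Suc n) p q Y) Q =
      fischer (C_pow m n p q Y) (A_op m (Suc (p + n)) (Suc (q + n)) Q)"
    using fischer_C_op_A_op[OF m W Q] by simp
  also have "\<dots> = fischer Y (A_pow m n (p + n) (q + n) (A_op m (Suc (p + n)) (Suc (q + n)) Q))"
    by (rule Suc.IH[OF AQ])
  also have "\<dots> = fischer Y (A_pow m (Suc n) (p + Suc n) (q + Suc n) Q)"
    unfolding A_pow_Suc' by simp
  finally show ?case .
qed simp

lemma fischer_S_u_pow_S_x_pow: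
  assumes m: "0 < m" and Z: "Z \<in> harm_bideg m p q"
  shows "n \<le> p \<Longrightarrow> W \<in> harm_bideg m (p - n) (q + n) \<Longrightarrow>
    fischer (S_u_pow m n p q Z) W = fischer Z (S_x_pow m n (p - n) (q + n) W)"
proof (induction n arbitrary: W)
  case (Suc n)
  have Z': "S_u_pow m n p q Z \<in> harm_bideg m (p - n) (q + n)" by (rule S_u_pow_harm_bideg[OF m Z])
  have W: "W \<in> harm_bideg m (p - n - 1) (Suc (q + n))" using Suc.prems by simp
  have p1: "1 \<le> p - n" using Suc.prems by simp
  then have "Suc (p - n - 1) = p - n" by arith
  then have W': "S_x m (p - n - 1) (Suc (q + n)) W \<in> harm_bideg m (p - n) (q + n)"
    using S_x_harm_bideg[OF m W] by simp
  have "fischer (S_u_pow m (Suc n) p q Z) W =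
      fischer (S_u_pow m n p q Z) (S_x m (p - n - 1) (Suc (q + n)) W)"
    using fischer_S_u_S_x[OF m Z' W p1] by simp
  also have "\<dots> = fischer Z (S_x_pow m n (p - n) (q + n) (S_x m (p - n - 1) (Suc (q + n)) W))"
    using Suc.IH[OF _ W'] Suc.prems by simp
  also have "\<dots> = fischer Z (S_x_pow m (Suc n) (p - Suc n) (q + Suc n) W)"
    unfolding S_x_pow_Suc' using Suc.prems by (simp add: Suc_diff_Suc)
  finally show ?case .
qed simp

lemma A_op_S_x_pow_commute:
  assumes m: "2 < m" and X: "X \<in> harm_bideg m p q" and p: "1 \<le> p"
  shows "A_op m (p + j) (q - j) (S_x_pow m j p q X) =
     scal (\<Prod>t<j. comm_coeff m (p + t)) (S_x_pow m j (p - 1) (q - 1) (A_op m p q X))"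
proof (induction j)
  case (Suc j)
  have m0: "0 < m" using m by simp
  define Y where "Y = S_x_pow m j p q X"
  define c where "c = (\<Prod>t<j. comm_coeff m (p + t))"
  define W where "W = S_x_pow m j (p - 1) (q - 1) (A_op m p q X)"
  have Y: "Y \<in> harm_bideg m (p + j) (q - j)" unfolding Y_def by (rule S_x_pow_harm_bideg[OF m0 X])
  have shift: "p - 1 + j = p + j - 1" "q - 1 - j = q - j - 1" using p by arith+
  have W: "W \<in> harm_bideg m (p + j - 1) (q - j - 1)"
    using S_x_pow_harm_bideg[OF m0 A_op_harm_bideg[OF X], of j] unfolding W_def shift .
  have "p + Suc j = Suc (p + j)" "q - Suc j = q - j - 1" by arith+
  then have "A_op m (p + Suc j) (q - Suc j) (S_x_pow m (Suc j) p q X) =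
      A_op m (Suc (p + j)) (q - j - 1) (S_x m (p + j) (q - j) Y)"
    by (simp add: Y_def)
  also have "\<dots> = scal (comm_coeff m (p + j)) (S_x m (p + j - 1) (q - j - 1) (A_op m (p + j) (q - j) Y))"
    using A_op_S_x_commute[OF m Y] p by simp
  also have "A_op m (p + j) (q - j) Y = scal c W"
    using Suc.IH by (simp add: Y_def c_def W_def)
  also have "S_x m (p + j - 1) (q - j - 1) (scal c W) = scal c (S_x m (p + j - 1) (q - j - 1) W)"
    by (rule S_x_scal[OF m0 W])
  also have "S_x m (p + j - 1) (q - j - 1) W = S_x_pow m (Suc j) (p - 1) (q - 1) (A_op m p q X)"
    unfolding shift[symmetric] by (simp add: W_def)
  finally show ?case
    unfolding scal_scal c_def by (simp only: prod.lessThan_Suc of_real_mult mult.commute)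
qed simp

lemma A_pow_S_x_pow_commute:
  assumes m: "2 < m" and X: "X \<in> harm_bideg m p q"
  shows "i \<le> p \<Longrightarrow> A_pow m i (p + j) (q - j) (S_x_pow m j p q X) =
     scal (\<Prod>s<i. \<Prod>t<j. comm_coeff m (p - s + t)) (S_x_pow m j (p - i) (q - i) (A_pow m i p q X))"
proof (induction i)
  case (Suc i)
  have m0: "0 < m" using m by simp
  define g where "g = (\<Prod>s<i. \<Prod>t<j. comm_coeff m (p - s + t))"
  define W where "W = A_pow m i p q X"
  have W: "W \<in> harm_bideg m (p - i) (q - i)" unfolding W_def by (rule A_pow_harm_bideg[OF X])
  have p1: "1 \<le> p - i" using Suc.prems by simp
  have shift: "p + j - i = p - i + j" "q - j - i = q - i - j" using Suc.prems by arith+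
  have "A_pow m (Suc i) (p + j) (q - j) (S_x_pow m j p q X) =
      A_op m (p - i + j) (q - i - j) (A_pow m i (p + j) (q - j) (S_x_pow m j p q X))"
    by (simp only: A_pow.simps shift)
  also have "A_pow m i (p + j) (q - j) (S_x_pow m j p q X) = scal g (S_x_pow m j (p - i) (q - i) W)"
    using Suc.IH Suc.prems by (simp add: g_def W_def)
  also have "A_op m (p - i + j) (q - i - j) (scal g (S_x_pow m j (p - i) (q - i) W)) =
      scal g (A_op m (p - i + j) (q - i - j) (S_x_pow m j (p - i) (q - i) W))"
    by (rule A_op_scal[OF S_x_pow_harm_bideg[OF m0 W]])
  also have "A_op m (p - i + j) (q - i - j) (S_x_pow m j (p - i) (q - i) W) =
      scal (\<Prod>t<j. comm_coeff m (p - i + t)) (S_x_pow m j (p - Suc i) (q - Suc i) (A_pow m (Suc i) p q X))"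
    using A_op_S_x_pow_commute[OF m W p1] by (simp add: W_def)
  finally show ?case
    unfolding scal_scal g_def by (simp only: prod.lessThan_Suc of_real_mult)
qed simp

definition proj_term :: "nat \<Rightarrow> nat \<Rightarrow> nat \<Rightarrow> nat \<Rightarrow> nat \<Rightarrow> cpoly \<Rightarrow> cpoly" where
  "proj_term m k l i j X =
     C_pow m i (k-i) (l-i) (S_u_pow m j (k+j-i) (l-j-i) (A_pow m i (k+j) (l-j) (S_x_pow m j k l X)))"

lemma Proj_eq_sum_proj_term:
  "Proj m k l X = (\<Sum>i\<le>l. \<Sum>j\<le>l. scal (beta m k l i j) (proj_term m k l i j X))"
  unfolding Proj_def proj_term_def scal_def ..

lemma fischer_proj_term:
  assumes m: "2 < m" and kl: "l \<le> k" "i + j \<le> l"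
    and X: "X \<in> harm_bideg m k l" and Y: "Y \<in> harm_bideg m k l"
  shows "fischer (proj_term m k l i j X) Y =
    complex_of_real (\<Prod>s<i. \<Prod>t<j. comm_coeff m (k - s + t)) *
    fischer (S_x_pow m j (k - i) (l - i) (A_pow m i k l X)) (S_x_pow m j (k - i) (l - i) (A_pow m i k l Y))"
proof -
  have m0: "0 < m" using m by simp
  have shift: "k + j - i - j = k - i" "l - j - i + j = l - i" using kl by arith+
  define Z where "Z = A_pow m i (k+j) (l-j) (S_x_pow m j k l X)"
  have Z: "Z \<in> harm_bideg m (k + j - i) (l - j - i)"
    unfolding Z_def by (rule A_pow_harm_bideg[OF S_x_pow_harm_bideg[OF m0 X]])
  have SZ: "S_u_pow m j (k+j-i) (l-j-i) Z \<in> harm_bideg m (k - i) (l - i)"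
    using S_u_pow_harm_bideg[OF m0 Z, of j] unfolding shift .
  have AY: "A_pow m i k l Y \<in> harm_bideg m (k + j - i - j) (l - j - i + j)"
    using A_pow_harm_bideg[OF Y, of i] unfolding shift .
  have "fischer (proj_term m k l i j X) Y = fischer (S_u_pow m j (k+j-i) (l-j-i) Z) (A_pow m i k l Y)"
    using fischer_C_pow_A_pow[OF m0 SZ, of Y i] Y kl unfolding proj_term_def Z_def by simp
  also have "\<dots> = fischer Z (S_x_pow m j (k - i) (l - i) (A_pow m i k l Y))"
    using fischer_S_u_pow_S_x_pow[OF m0 Z _ AY] kl unfolding shift by simp
  also have "Z = scal (\<Prod>s<i. \<Prod>t<j. comm_coeff m (k - s + t)) (S_x_pow m j (k - i) (l - i) (A_pow m i k l X))"
    unfolding Z_def using kl by (intro A_pow_S_x_pow_commute[OF m X]) simp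
  finally show ?thesis by (simp add: fischer_scal_left)
qed

lemma proj_term_vanish:
  assumes "0 < m" "j \<le> l" "l < i + j" "X \<in> harm_bideg m k l"
  shows "proj_term m k l i j X = 0"
proof -
  have "A_pow m i (k+j) (l-j) (S_x_pow m j k l X) = 0"
    using assms by (intro A_pow_vanish[OF S_x_pow_harm_bideg]) auto
  then show ?thesis by (simp add: proj_term_def)
qed

lemma proj_term_selfadjoint:
  assumes m: "2 < m" and kl: "l \<le> k" "j \<le> l"
    and P: "P \<in> harm_bideg m k l" and Q: "Q \<in> harm_bideg m k l"
  shows "fischer (proj_term m k l i j P) Q = fischer P (proj_term m k l i j Q)"
proof (cases "i + j \<le> l")
  case True
  let ?g = "complex_of_real (\<Prod>s<i. \<Prod>t<j. comm_coeff m (k - s + t))"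
  let ?G = "\<lambda>X. S_x_pow m j (k - i) (l - i) (A_pow m i k l X)"
  have "fischer P (proj_term m k l i j Q) = cnj (fischer (proj_term m k l i j Q) P)"
    by (rule fischer_cnj_commute)
  also have "\<dots> = cnj (?g * fischer (?G Q) (?G P))"
    using fischer_proj_term[OF m kl(1) True Q P] by simp
  also have "\<dots> = ?g * fischer (?G P) (?G Q)"
    by (subst (2) fischer_cnj_commute) simp
  also have "\<dots> = fischer (proj_term m k l i j P) Q"
    using fischer_proj_term[OF m kl(1) True P Q] by simp
  finally show ?thesis ..
next
  case False
  with m kl P Q show ?thesis by (simp add: proj_term_vanish)
qed

theorem theorem6p1:
  fixes m k l :: nat
  assumes "m > 4" and "k \<ge> l"
    and "P \<in> Pspace m k l \<inter> harm m" and "Q \<in> Pspace m k l \<inter> harm m"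
  shows "fischer (Proj m k l P) Q = fischer P (Proj m k l Q)"
proof -
  have m: "2 < m" using assms(1) by simp
  have P: "P \<in> harm_bideg m k l" and Q: "Q \<in> harm_bideg m k l"
    using assms(3,4) by (simp_all add: harm_bideg_def)
  have "fischer (Proj m k l P) Q = (\<Sum>i\<le>l. \<Sum>j\<le>l. beta m k l i j * fischer (proj_term m k l i j P) Q)"
    by (simp add: Proj_eq_sum_proj_term fischer_sum_left fischer_scal_left)
  also have "\<dots> = (\<Sum>i\<le>l. \<Sum>j\<le>l. beta m k l i j * fischer P (proj_term m k l i j Q))"
    using proj_term_selfadjoint[OF m assms(2) _ P Q] by simp
  also have "\<dots> = fischer P (Proj m k l Q)"
    by (simp add: Proj_eq_sum_proj_term fischer_sum_right fischer_scal_right)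
  finally show ?thesis .
qed

end
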